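(* Let $k$ be any field, let $H=\bigoplus_{n\ge0}H^n$ be a graded Hopf algebra with finite-dimensional homogeneous components, and let $L=\bigoplus_{n\ge0}(H^n)^*$ be its graded dual Hopf algebra. Assume $H^0=H_0$ is both cosemisimple and semisimple (so that $L^0$ is also). Then the following are equivalent: (i) $H$ is coradically graded and is generated as an algebra by $H^0$ and $H^1$; (ii) $L$ is coradically graded and is generated as an algebra by $L^0$ and $L^1$.
   Context: A graded coalgebra $C=\bigoplus_{i\ge0}C(i)$ is coradically graded if $C(0)=C_0$ (the coradical) and $C_1=C(0)\oplus C(1)$, where $C_0\subseteq C_1\subseteq\cdots$ is the coradical filtration. $H_0$ denotes the coradical of $H$. The graded dual $L$ has $L^n=(H^n)^*$ with the Hopf algebra structure dual to that of $H$. *)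

theory Defs
  imports Main
begin

text \<open>
  A graded Hopf algebra H over a field 'k with finite-dimensional homogeneous
  components H^n is encoded by a homogeneous basis: H^n has basis e_(n,i),
  i < hdim H n.  Elements of H are finitely supported coefficient functions
  on basis indices (n,i); elements of H (x) H are finitely supported
  functions on pairs of basis indices, etc.  Structure constants:
    e_(p,i) e_(q,j) = sum_k hmu H p i q j k e_(p+q,k)
    Delta e_(n,k)   = sum_{p+q=n} sum_{i,j} hde H p i q j k e_(p,i) (x) e_(q,j)
    1 = sum_i hun H i e_(0,i),   eps e_(0,i) = hcu H i,  eps(H^n) = 0 for n>0
    S e_(n,i) = sum_j han H n i j e_(n,j).
  Gradedness of all structure maps is built into this encoding.
\<close>

record 'k hopf_data =
  hdim :: "nat \<Rightarrow> nat"
  hmu  :: "nat \<Rightarrow> nat \<Rightarrow> nat \<Rightarrow> nat \<Rightarrow> nat \<Rightarrow> 'k"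
  hde  :: "nat \<Rightarrow> nat \<Rightarrow> nat \<Rightarrow> nat \<Rightarrow> nat \<Rightarrow> 'k"
  hun  :: "nat \<Rightarrow> 'k"
  hcu  :: "nat \<Rightarrow> 'k"
  han  :: "nat \<Rightarrow> nat \<Rightarrow> nat \<Rightarrow> 'k"

type_synonym 'k vec = "nat \<times> nat \<Rightarrow> 'k"
type_synonym 'k ten = "(nat \<times> nat) \<times> (nat \<times> nat) \<Rightarrow> 'k"
type_synonym 'k ten3 = "(nat \<times> nat) \<times> (nat \<times> nat) \<times> (nat \<times> nat) \<Rightarrow> 'k"

definition valid_idx :: "'k hopf_data \<Rightarrow> nat \<times> nat \<Rightarrow> bool" where
  "valid_idx H a \<longleftrightarrow> snd a < hdim H (fst a)"

definition carrier_H :: "('k::field) hopf_data \<Rightarrow> 'k vec set" where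
  "carrier_H H = {v. (\<forall>a. \<not> valid_idx H a \<longrightarrow> v a = 0) \<and> finite {a. v a \<noteq> 0}}"

definition tensor :: "('a \<Rightarrow> 'k::field) \<Rightarrow> ('b \<Rightarrow> 'k) \<Rightarrow> ('a \<times> 'b \<Rightarrow> 'k)" where
  "tensor x y = (\<lambda>(a,b). x a * y b)"

definition mult_t :: "('k::field) hopf_data \<Rightarrow> 'k ten \<Rightarrow> 'k vec" where
  "mult_t H t = (\<lambda>(n,k). if k < hdim H n then
      (\<Sum>p\<le>n. \<Sum>i<hdim H p. \<Sum>j<hdim H (n-p).
          t ((p,i),(n-p,j)) * hmu H p i (n-p) j k) else 0)"

definition mult :: "('k::field) hopf_data \<Rightarrow> 'k vec \<Rightarrow> 'k vec \<Rightarrow> 'k vec" where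
  "mult H v w = mult_t H (tensor v w)"

definition one :: "('k::field) hopf_data \<Rightarrow> 'k vec" where
  "one H = (\<lambda>(n,i). if n = 0 \<and> i < hdim H 0 then hun H i else 0)"

definition comul :: "('k::field) hopf_data \<Rightarrow> 'k vec \<Rightarrow> 'k ten" where
  "comul H v = (\<lambda>((p,i),(q,j)). if i < hdim H p \<and> j < hdim H q then
      (\<Sum>k<hdim H (p+q). v (p+q,k) * hde H p i q j k) else 0)"

definition eps :: "('k::field) hopf_data \<Rightarrow> 'k vec \<Rightarrow> 'k" where
  "eps H v = (\<Sum>i<hdim H 0. v (0,i) * hcu H i)"

definition comul_l :: "('k::field) hopf_data \<Rightarrow> 'k ten \<Rightarrow> 'k ten3" where
  "comul_l H t = (\<lambda>((p,i),(q,j),c). if i < hdim H p \<and> j < hdim H q then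
      (\<Sum>k<hdim H (p+q). t ((p+q,k),c) * hde H p i q j k) else 0)"

definition comul_r :: "('k::field) hopf_data \<Rightarrow> 'k ten \<Rightarrow> 'k ten3" where
  "comul_r H t = (\<lambda>(a,(p,i),(q,j)). if i < hdim H p \<and> j < hdim H q then
      (\<Sum>k<hdim H (p+q). t (a,(p+q,k)) * hde H p i q j k) else 0)"

definition eps_l :: "('k::field) hopf_data \<Rightarrow> 'k ten \<Rightarrow> 'k vec" where
  "eps_l H t = (\<lambda>b. \<Sum>i<hdim H 0. t ((0,i),b) * hcu H i)"

definition eps_r :: "('k::field) hopf_data \<Rightarrow> 'k ten \<Rightarrow> 'k vec" where
  "eps_r H t = (\<lambda>a. \<Sum>i<hdim H 0. t (a,(0,i)) * hcu H i)"

definition tmult :: "('k::field) hopf_data \<Rightarrow> 'k ten \<Rightarrow> 'k ten \<Rightarrow> 'k ten" where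
  "tmult H s t = (\<lambda>((n,k),(n',k')). if k < hdim H n \<and> k' < hdim H n' then
      (\<Sum>p\<le>n. \<Sum>p'\<le>n'. \<Sum>i<hdim H p. \<Sum>j<hdim H (n-p).
         \<Sum>i'<hdim H p'. \<Sum>j'<hdim H (n'-p').
         s ((p,i),(p',i')) * t ((n-p,j),(n'-p',j'))
           * hmu H p i (n-p) j k * hmu H p' i' (n'-p') j' k') else 0)"

definition ant_l :: "('k::field) hopf_data \<Rightarrow> 'k ten \<Rightarrow> 'k ten" where
  "ant_l H t = (\<lambda>((p,i),b). if i < hdim H p then
      (\<Sum>i'<hdim H p. t ((p,i'),b) * han H p i' i) else 0)"

definition ant_r :: "('k::field) hopf_data \<Rightarrow> 'k ten \<Rightarrow> 'k ten" where
  "ant_r H t = (\<lambda>(a,(p,i)). if i < hdim H p then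
      (\<Sum>i'<hdim H p. t (a,(p,i')) * han H p i' i) else 0)"

definition graded_hopf :: "('k::field) hopf_data \<Rightarrow> bool" where
  "graded_hopf H \<longleftrightarrow>
     (\<forall>u\<in>carrier_H H. \<forall>v\<in>carrier_H H. \<forall>w\<in>carrier_H H.
        mult H (mult H u v) w = mult H u (mult H v w)) \<and>
     (\<forall>v\<in>carrier_H H. mult H (one H) v = v \<and> mult H v (one H) = v) \<and>
     (\<forall>v\<in>carrier_H H. comul_l H (comul H v) = comul_r H (comul H v)) \<and>
     (\<forall>v\<in>carrier_H H. eps_l H (comul H v) = v \<and> eps_r H (comul H v) = v) \<and>
     (\<forall>v\<in>carrier_H H. \<forall>w\<in>carrier_H H.
        comul H (mult H v w) = tmult H (comul H v) (comul H w)) \<and>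
     comul H (one H) = tensor (one H) (one H) \<and>
     (\<forall>v\<in>carrier_H H. \<forall>w\<in>carrier_H H. eps H (mult H v w) = eps H v * eps H w) \<and>
     eps H (one H) = 1 \<and>
     (\<forall>v\<in>carrier_H H.
        mult_t H (ant_l H (comul H v)) = (\<lambda>a. eps H v * one H a) \<and>
        mult_t H (ant_r H (comul H v)) = (\<lambda>a. eps H v * one H a))"

text \<open>Graded dual L = \<Oplus> (H^n)^*, written in the dual bases: structure constants
  of multiplication and comultiplication are exchanged, unit and counit are
  exchanged, and the antipode matrix is transposed.\<close>
definition gdual :: "('k::field) hopf_data \<Rightarrow> 'k hopf_data" where
  "gdual H = H\<lparr> hmu := hde H, hde := hmu H, hun := hcu H, hcu := hun H,
                han := (\<lambda>n i j. han H n j i) \<rparr>"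

definition lin_span :: "('a \<Rightarrow> 'k::field) set \<Rightarrow> ('a \<Rightarrow> 'k) set" where
  "lin_span S = {v. \<exists>(n::nat) c xs. (\<forall>i<n. xs i \<in> S) \<and> v = (\<lambda>x. \<Sum>i<n. c i * xs i x)}"

definition subspace :: "('a \<Rightarrow> 'k::field) set \<Rightarrow> bool" where
  "subspace W \<longleftrightarrow> (\<lambda>_. 0) \<in> W \<and> (\<forall>u\<in>W. \<forall>w\<in>W. (\<lambda>x. u x + w x) \<in> W)
      \<and> (\<forall>c. \<forall>u\<in>W. (\<lambda>x. c * u x) \<in> W)"

definition ssum :: "('a \<Rightarrow> 'k::field) set \<Rightarrow> ('a \<Rightarrow> 'k) set \<Rightarrow> ('a \<Rightarrow> 'k) set" where
  "ssum A B = {(\<lambda>x. a x + b x) | a b. a \<in> A \<and> b \<in> B}"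

definition tens_span :: "('k::field) vec set \<Rightarrow> 'k vec set \<Rightarrow> 'k ten set" where
  "tens_span A B = lin_span {tensor x y | x y. x \<in> A \<and> y \<in> B}"

definition subcoalg :: "('k::field) hopf_data \<Rightarrow> 'k vec set \<Rightarrow> bool" where
  "subcoalg H C \<longleftrightarrow> C \<subseteq> carrier_H H \<and> subspace C \<and>
      (\<forall>x\<in>C. comul H x \<in> tens_span C C)"

definition simple_subcoalg :: "('k::field) hopf_data \<Rightarrow> 'k vec set \<Rightarrow> bool" where
  "simple_subcoalg H C \<longleftrightarrow> subcoalg H C \<and> C \<noteq> {\<lambda>_. 0} \<and>
      (\<forall>D. subcoalg H D \<and> D \<subseteq> C \<longrightarrow> D = {\<lambda>_. 0} \<or> D = C)"

definition coradical :: "('k::field) hopf_data \<Rightarrow> 'k vec set" where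
  "coradical H = lin_span (\<Union> {C. simple_subcoalg H C})"

primrec corad_filt :: "('k::field) hopf_data \<Rightarrow> nat \<Rightarrow> 'k vec set" where
  "corad_filt H 0 = coradical H"
| "corad_filt H (Suc n) = {x \<in> carrier_H H. comul H x \<in>
      ssum (tens_span (carrier_H H) (corad_filt H n)) (tens_span (coradical H) (carrier_H H))}"

definition hcomp :: "('k::field) hopf_data \<Rightarrow> nat \<Rightarrow> 'k vec set" where
  "hcomp H n = {v \<in> carrier_H H. \<forall>m i. m \<noteq> n \<longrightarrow> v (m,i) = 0}"

definition coradically_graded :: "('k::field) hopf_data \<Rightarrow> bool" where
  "coradically_graded H \<longleftrightarrow> coradical H = hcomp H 0 \<and>
      corad_filt H 1 = ssum (hcomp H 0) (hcomp H 1)"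

definition cosemisimple :: "('k::field) hopf_data \<Rightarrow> 'k vec set \<Rightarrow> bool" where
  "cosemisimple H C \<longleftrightarrow> C = lin_span (\<Union> {D. simple_subcoalg H D \<and> D \<subseteq> C})"

definition subalgebra :: "('k::field) hopf_data \<Rightarrow> 'k vec set \<Rightarrow> bool" where
  "subalgebra H A \<longleftrightarrow> A \<subseteq> carrier_H H \<and> subspace A \<and> one H \<in> A \<and>
      (\<forall>x\<in>A. \<forall>y\<in>A. mult H x y \<in> A)"

definition generated_by_01 :: "('k::field) hopf_data \<Rightarrow> bool" where
  "generated_by_01 H \<longleftrightarrow>
     (\<forall>A. subalgebra H A \<and> hcomp H 0 \<union> hcomp H 1 \<subseteq> A \<longrightarrow> A = carrier_H H)"

definition left_ideal :: "('k::field) hopf_data \<Rightarrow> 'k vec set \<Rightarrow> 'k vec set \<Rightarrow> bool" where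
  "left_ideal H A I \<longleftrightarrow> I \<subseteq> A \<and> subspace I \<and> (\<forall>a\<in>A. \<forall>x\<in>I. mult H a x \<in> I)"

definition semisimple_alg :: "('k::field) hopf_data \<Rightarrow> 'k vec set \<Rightarrow> bool" where
  "semisimple_alg H A \<longleftrightarrow> (\<forall>I. left_ideal H A I \<longrightarrow>
      (\<exists>J. left_ideal H A J \<and> ssum I J = A \<and> I \<inter> J = {\<lambda>_. 0}))"

end

theory Submission
  imports Defs "HOL.Vector_Spaces" "HOL-Library.Function_Algebras"
begin

text \<open>
  In the homogeneous bases, the structure constants of the multiplication of the graded dual \<open>L\<close>
  are those of the comultiplication of \<open>H\<close>, and vice versa. When the coradical is the degree-zero
  part, \<open>H\<close> is coradically graded iff for \<open>n \<ge> 2\<close> no nonzero element of \<open>H\<^sup>n\<close> has a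
  comultiplication vanishing on every \<open>H\<^sup>p \<otimes> H\<^sup>q\<close> with \<open>p, q > 0\<close>; and, by associativity, \<open>H\<close>
  is generated by \<open>H\<^sup>0\<close> and \<open>H\<^sup>1\<close> iff for \<open>n \<ge> 2\<close> the products \<open>H\<^sup>p H\<^sup>q\<close> with \<open>p, q > 0\<close>,
  \<open>p + q = n\<close>, span \<open>H\<^sup>n\<close>. These two linear conditions are transposes of each other, so each
  holds for \<open>H\<close> iff the other holds for \<open>L\<close>.

  It remains to see that the coradical of \<open>L\<close> is again \<open>L\<^sup>0\<close>. Every simple subcoalgebra of \<open>L\<close>
  lies in \<open>L\<^sup>0\<close>, because the counit of \<open>L\<close> is the unit of \<open>H\<close>. Conversely, the annihilator in
  \<open>L\<^sup>0\<close> of a maximal ideal of the semisimple algebra \<open>H\<^sup>0\<close> is a simple subcoalgebra, and since the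
  maximal ideals of \<open>H\<^sup>0\<close> separate points, these annihilators span \<open>L\<^sup>0\<close>.
\<close>

section \<open>Linear algebra of coefficient functions\<close>

interpretation fv: vector_space "\<lambda>(c::'k::field) (v::'a \<Rightarrow> 'k). (\<lambda>x. c * v x)"
  by unfold_locales (auto simp: fun_eq_iff algebra_simps)

lemma sum_apply: "(\<Sum>a\<in>A. f a) x = (\<Sum>a\<in>A. f a x)"
  by (induct A rule: infinite_finite_induct) auto

lemma subspace_iff_fv_subspace: "Defs.subspace W \<longleftrightarrow> fv.subspace W"
  unfolding subspace_def fv.subspace_def zero_fun_def plus_fun_def by simp

lemma lin_span_eq_span: "lin_span S = fv.span S"
proof
  show "lin_span S \<subseteq> fv.span S"
  proof
    fix v assume "v \<in> lin_span S"
    then obtain n c xs where h: "\<forall>i<(n::nat). xs i \<in> S" "v = (\<lambda>x. \<Sum>i<n. c i * xs i x)"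
      unfolding lin_span_def by (auto simp only: mem_Collect_eq)
    have "v = (\<Sum>i<n. (\<lambda>x. c i * xs i x))"
      unfolding h by (auto simp: fun_eq_iff sum_apply)
    also have "\<dots> \<in> fv.span S"
      by (rule fv.span_sum, rule fv.span_scale, rule fv.span_base) (use h in auto)
    finally show "v \<in> fv.span S" .
  qed
next
  show "fv.span S \<subseteq> lin_span S"
  proof
    fix v assume "v \<in> fv.span S"
    then show "v \<in> lin_span S"
    proof (induct rule: fv.span_induct_alt)
      case base
      show ?case unfolding lin_span_def zero_fun_def by (intro CollectI exI[of _ 0]) auto
    next
      case (step c x y)
      then obtain n d xs where h: "\<forall>i<(n::nat). xs i \<in> S" "y = (\<lambda>x. \<Sum>i<n. d i * xs i x)"
        unfolding lin_span_def by (auto simp only: mem_Collect_eq)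
      show ?case unfolding lin_span_def
      proof (intro CollectI exI conjI allI impI)
        fix i assume "i < Suc n"
        then show "(xs(n := x)) i \<in> S" using h step by auto
      next
        show "(\<lambda>z. c * x z) + y = (\<lambda>z. \<Sum>i<Suc n. (d(n := c)) i * (xs(n := x)) i z)"
          unfolding h by (auto simp: fun_eq_iff intro!: sum.cong)
      qed
    qed
  qed
qed

lemma tens_span_eq_span: "tens_span U V = fv.span {tensor x y | x y. x \<in> U \<and> y \<in> V}"
  unfolding tens_span_def lin_span_eq_span ..

lemma linear_map_span_into_subspace:
  assumes "v \<in> fv.span S" "fv.subspace T" "\<And>s. s \<in> S \<Longrightarrow> f s \<in> T"
    and "\<And>x y. f (\<lambda>a. x a + y a) = (\<lambda>a. f x a + f y a)"
    and "\<And>c x. f (\<lambda>a. c * x a) = (\<lambda>a. c * f x a)" and "f (\<lambda>_. 0) = (\<lambda>_. 0)"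
  shows "f v \<in> T"
proof -
  have "fv.subspace {v. f v \<in> T}"
    using assms(2,4-6) unfolding fv.subspace_def plus_fun_def zero_fun_def by auto
  then show ?thesis
    using fv.span_induct[where P = "\<lambda>v. f v \<in> T", OF assms(1)] assms(3) by blast
qed

lemma linear_maps_eq_on_span:
  assumes "x \<in> fv.span S" "\<And>s. s \<in> S \<Longrightarrow> f s = g s"
    and "\<And>x y. f (\<lambda>a. x a + y a) = (\<lambda>a. f x a + f y a)"
    and "\<And>c x. f (\<lambda>a. c * x a) = (\<lambda>a. c * f x a)" and "f (\<lambda>_. 0) = (\<lambda>_. 0)"
    and "\<And>x y. g (\<lambda>a. x a + y a) = (\<lambda>a. g x a + g y a)"
    and "\<And>c x. g (\<lambda>a. c * x a) = (\<lambda>a. c * g x a)" and "g (\<lambda>_. 0) = (\<lambda>_. 0)"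
  shows "f x = g x"
proof -
  have "fv.subspace {x. f x = g x}"
    unfolding fv.subspace_def plus_fun_def zero_fun_def using assms(3-8) by auto
  then show ?thesis
    using fv.span_induct[where P = "\<lambda>x. f x = g x", OF assms(1)] assms(2) by blast
qed

lemma dim_less_if_psubset:
  assumes S: "fv.subspace S" and ST: "S \<subset> T" and B: "finite B" "T \<subseteq> fv.span B"
  shows "fv.dim S < fv.dim T"
proof -
  obtain BS where BS: "BS \<subseteq> S" "fv.independent BS" "S \<subseteq> fv.span BS" "card BS = fv.dim S"
    by (rule fv.basis_exists)
  obtain BT where BT: "BT \<subseteq> T" "fv.independent BT" "T \<subseteq> fv.span BT" "card BT = fv.dim T"
    by (rule fv.basis_exists)
  have finBT: "finite BT"
    using fv.independent_span_bound[OF B(1) BT(2)] BT(1) B(2) by blast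
  obtain x where x: "x \<in> T" "x \<notin> S" using ST by blast
  have xBS: "x \<notin> fv.span BS"
    using x fv.span_minimal[OF BS(1) S] by blast
  then have "x \<notin> BS"
    using fv.span_base by blast
  have "fv.independent (insert x BS)"
    using xBS BS(2) by (rule fv.independent_insertI)
  moreover have "insert x BS \<subseteq> fv.span BT"
    using x(1) BS(1) ST BT(3) by blast
  ultimately have le: "finite (insert x BS) \<and> card (insert x BS) \<le> card BT"
    by (rule fv.independent_span_bound[OF finBT])
  then have "card (insert x BS) = Suc (card BS)"
    using \<open>x \<notin> BS\<close> by simp
  then show ?thesis
    using le BS(4) BT(4) by simp
qed

definition dot :: "'a set \<Rightarrow> ('a \<Rightarrow> 'k::field) \<Rightarrow> ('a \<Rightarrow> 'k) \<Rightarrow> 'k" where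
  "dot F c v = (\<Sum>y\<in>F. c y * v y)"

lemma dot_commute: "dot F c v = dot F v c"
  unfolding dot_def by (intro sum.cong refl) (rule mult.commute)

lemma dot_add: "dot F c (\<lambda>x. u x + v x) = dot F c u + dot F c v"
  unfolding dot_def distrib_left by (rule sum.distrib)

lemma dot_scale: "dot F c (\<lambda>x. t * v x) = t * dot F c v"
  unfolding dot_def sum_distrib_left by (intro sum.cong refl) (rule mult.left_commute)

lemma subspace_dot_eq_0: "fv.subspace {v. dot F c v = (0::'k::field)}"
  unfolding fv.subspace_def plus_fun_def zero_fun_def by (simp add: dot_add dot_scale) (simp add: dot_def)

lemma dot_eq_0_on_span:
  "v \<in> fv.span R \<Longrightarrow> (\<And>r. r \<in> R \<Longrightarrow> dot F c r = 0) \<Longrightarrow> dot F c v = (0::'k::field)"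
  using fv.span_induct[where P = "\<lambda>v. dot F c v = 0", OF _ subspace_dot_eq_0, of v R] by simp

text \<open>Extend a basis of \<open>span R\<close> by \<open>v\<close> and take a linear functional that vanishes on the basis
  and not on \<open>v\<close>; on functions supported in \<open>F\<close> it is \<open>dot F c\<close> for the values \<open>c\<close> it takes on
  the indicator functions.\<close>

lemma exists_separating_dot:
  fixes v :: "'a \<Rightarrow> 'k::field"
  assumes F: "finite F" and v: "v \<notin> fv.span R"
    and supp: "\<And>w y. w \<in> insert v R \<Longrightarrow> y \<notin> F \<Longrightarrow> w y = 0"
  shows "\<exists>c. (\<forall>r\<in>R. dot F c r = 0) \<and> dot F c v \<noteq> 0"
proof -
  interpret fv_k: vector_space_pair "\<lambda>(c::'k) (v::'a \<Rightarrow> 'k). (\<lambda>x. c * v x)" "(*)"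
    by unfold_locales (auto simp: fun_eq_iff algebra_simps)
  obtain B where B: "B \<subseteq> R" "fv.independent B" "R \<subseteq> fv.span B"
    by (rule fv.maximal_independent_subset)
  have vB: "v \<notin> fv.span B"
    using v fv.span_mono[OF B(1)] by blast
  then have "fv.independent (insert v B)"
    using B(2) by (rule fv.independent_insertI)
  then obtain g where g: "Vector_Spaces.linear (\<lambda>c v x. c * v x) (*) g"
      "\<forall>w\<in>insert v B. g w = (if w = v then 1 else 0)"
    using fv_k.linear_independent_extend[of "insert v B" "\<lambda>w. if w = v then 1 else 0"] by blast
  have gR: "g r = 0" if "r \<in> R" for r
    using fv_k.linear_eq_0_on_span[OF g(1), of B r] g(2) B(3) that vB
    by (metis fv.span_base insert_iff subsetD)
  define c where "c y = g (\<lambda>x. if x = y then 1 else 0)" for y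
  have dot_g: "dot F c w = g w" if "w \<in> insert v R" for w
  proof -
    have "w = (\<Sum>y\<in>F. (\<lambda>x. w y * (if x = y then 1 else 0)))"
      using supp[OF that] F by (auto simp: fun_eq_iff sum_apply if_distrib sum.delta cong: if_cong)
    then have "g w = (\<Sum>y\<in>F. g (\<lambda>x. w y * (if x = y then 1 else 0)))"
      by (metis fv_k.linear_sum[OF g(1)])
    also have "\<dots> = (\<Sum>y\<in>F. w y * c y)"
      unfolding c_def by (rule sum.cong[OF refl]) (rule fv_k.linear_scale[OF g(1)])
    finally show ?thesis by (simp add: dot_def mult.commute)
  qed
  show ?thesis
    using dot_g gR g(2) by (intro exI[of _ c]) auto
qed

lemma tensor_span_col:
  assumes "T \<in> fv.span {tensor x y | x y. x \<in> U \<and> y \<in> V}" "fv.subspace U"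
  shows "(\<lambda>a. T (a,b)) \<in> U"
  using assms(1)
proof (induct rule: fv.span_induct)
  case base
  show ?case using assms(2) unfolding fv.subspace_def by (auto simp: zero_fun_def plus_fun_def)
next
  case (step T)
  then obtain x y where "x \<in> U" "T = tensor x y" by blast
  then have "(\<lambda>a. T (a,b)) = (\<lambda>a. y b * x a)" by (auto simp: tensor_def fun_eq_iff)
  then show ?case using assms(2) \<open>x \<in> U\<close> unfolding fv.subspace_def by auto
qed

lemma tensor_span_row:
  assumes "T \<in> fv.span {tensor x y | x y. x \<in> U \<and> y \<in> V}" "fv.subspace V"
  shows "(\<lambda>b. T (a,b)) \<in> V"
  using assms(1)
proof (induct rule: fv.span_induct)
  case base
  show ?case using assms(2) unfolding fv.subspace_def by (auto simp: zero_fun_def plus_fun_def)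
next
  case (step T)
  then obtain x y where "y \<in> V" "T = tensor x y" by blast
  then have "(\<lambda>b. T (a,b)) = (\<lambda>b. x a * y b)" by (auto simp: tensor_def fun_eq_iff)
  then show ?case using assms(2) \<open>y \<in> V\<close> unfolding fv.subspace_def by auto
qed

lemma subspace_diff_scale:
  assumes "fv.subspace U" "x \<in> U" "y \<in> U"
  shows "(\<lambda>a. x a - t * y a) \<in> U"
proof -
  have "x + (\<lambda>a. (-t) * y a) \<in> U"
    using assms unfolding fv.subspace_def by blast
  moreover have "x + (\<lambda>a. (-t) * y a) = (\<lambda>a. x a - t * y a)" by (auto simp: fun_eq_iff)
  ultimately show ?thesis by simp
qed

lemma support_subtract_rank_one:
  fixes T :: "'a \<times> 'b \<Rightarrow> 'k::field"
  assumes ab: "T (a0,b0) \<noteq> 0" and fin: "finite {z. T z \<noteq> 0}"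
  defines "T' \<equiv> \<lambda>(a,b). T (a,b) - (T (a0,b) / T (a0,b0)) * T (a,b0)"
  shows "finite {z. T' z \<noteq> 0}"
    and "card (fst ` {z. T' z \<noteq> 0}) < card (fst ` {z. T z \<noteq> 0})"
proof -
  have row: "a \<in> fst ` {z. T z \<noteq> 0}" if "T (a,b) \<noteq> 0" for a b
    using that by (intro image_eqI[where x = "(a,b)"]) auto
  have col: "b \<in> snd ` {z. T z \<noteq> 0}" if "T (a,b) \<noteq> 0" for a b
    using that by (intro image_eqI[where x = "(a,b)"]) auto
  have T': "T' (a,b) \<noteq> 0 \<Longrightarrow> T (a,b) \<noteq> 0 \<or> (T (a,b0) \<noteq> 0 \<and> T (a0,b) \<noteq> 0)" for a b
    unfolding T'_def by auto
  have "{z. T' z \<noteq> 0} \<subseteq> {z. T z \<noteq> 0} \<union> fst ` {z. T z \<noteq> 0} \<times> snd ` {z. T z \<noteq> 0}"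
  proof
    fix z assume "z \<in> {z. T' z \<noteq> 0}"
    then show "z \<in> {z. T z \<noteq> 0} \<union> fst ` {z. T z \<noteq> 0} \<times> snd ` {z. T z \<noteq> 0}"
      using T' row col by (cases z) blast
  qed
  then show "finite {z. T' z \<noteq> 0}"
    by (rule finite_subset) (use fin in simp)
  have "fst ` {z. T' z \<noteq> 0} \<subseteq> fst ` {z. T z \<noteq> 0} - {a0}"
  proof
    fix a assume "a \<in> fst ` {z. T' z \<noteq> 0}"
    then obtain b where b: "T' (a,b) \<noteq> 0" by auto
    moreover have "a \<noteq> a0" using b ab unfolding T'_def by auto
    ultimately show "a \<in> fst ` {z. T z \<noteq> 0} - {a0}" using T' row by blast
  qed
  moreover have "finite (fst ` {z. T z \<noteq> 0})" using fin by simp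
  moreover have "a0 \<in> fst ` {z. T z \<noteq> 0}" using row[OF ab] .
  ultimately show "card (fst ` {z. T' z \<noteq> 0}) < card (fst ` {z. T z \<noteq> 0})"
    by (meson card_Diff1_less card_mono finite_Diff order_le_less_trans)
qed

text \<open>By induction on the number of nonzero rows: subtracting a suitable rank-one tensor
  kills the row \<open>a\<^sub>0\<close>.\<close>

lemma tensor_spanI:
  fixes T :: "'a \<times> 'b \<Rightarrow> 'k::field"
  assumes U: "fv.subspace U" and V: "fv.subspace V" and fin: "finite {z. T z \<noteq> 0}"
    and cols: "\<And>b. (\<lambda>a. T (a,b)) \<in> U" and rows: "\<And>a. (\<lambda>b. T (a,b)) \<in> V"
  shows "T \<in> fv.span {tensor x y | x y. x \<in> U \<and> y \<in> V}"
  using fin cols rows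
proof (induct "card (fst ` {z. T z \<noteq> 0})" arbitrary: T rule: less_induct)
  case less
  let ?G = "fv.span {tensor x y | x y. x \<in> U \<and> y \<in> V}"
  show ?case
  proof (cases "\<exists>z. T z \<noteq> 0")
    case False
    then have "T = 0" by (auto simp: fun_eq_iff)
    then show ?thesis using fv.span_zero by simp
  next
    case True
    then obtain a0 b0 where ab: "T (a0,b0) \<noteq> 0" by auto
    define t where "t = T (a0,b0)"
    define T' where "T' = (\<lambda>(a,b). T (a,b) - (T (a0,b) / T (a0,b0)) * T (a,b0))"
    have "finite {z. T' z \<noteq> 0}" "card (fst ` {z. T' z \<noteq> 0}) < card (fst ` {z. T z \<noteq> 0})"
      using support_subtract_rank_one[of T a0 b0, OF ab less.prems(1), folded T'_def] by simp_all
    moreover have "(\<lambda>a. T' (a,b)) \<in> U" for b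
    proof -
      have "(\<lambda>a. T' (a,b)) = (\<lambda>a. T (a,b) - (T (a0,b) / t) * T (a,b0))"
        unfolding T'_def t_def by simp
      then show ?thesis using subspace_diff_scale[OF U less.prems(2,2)] by metis
    qed
    moreover have "(\<lambda>b. T' (a,b)) \<in> V" for a
    proof -
      have "(\<lambda>b. T' (a,b)) = (\<lambda>b. T (a,b) - (T (a,b0) / t) * T (a0,b))"
        unfolding T'_def t_def by (simp add: algebra_simps)
      then show ?thesis using subspace_diff_scale[OF V less.prems(3,3)] by metis
    qed
    ultimately have IH: "T' \<in> ?G"
      using less.hyps by blast
    have "tensor (\<lambda>a. T (a,b0)) (\<lambda>b. T (a0,b)) \<in> ?G"
      using less.prems(2,3) by (intro fv.span_base) blast
    then have "T' + (\<lambda>z. (1/t) * tensor (\<lambda>a. T (a,b0)) (\<lambda>b. T (a0,b)) z) \<in> ?G"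
      by (intro fv.span_add[OF IH] fv.span_scale)
    moreover have "T = T' + (\<lambda>z. (1/t) * tensor (\<lambda>a. T (a,b0)) (\<lambda>b. T (a0,b)) z)"
      unfolding T'_def tensor_def using ab by (auto simp: fun_eq_iff t_def field_simps)
    ultimately show ?thesis by simp
  qed
qed

section \<open>Homogeneous coordinates\<close>

definition bvec :: "nat \<times> nat \<Rightarrow> nat \<times> nat \<Rightarrow> 'k::field" where
  "bvec a = (\<lambda>b. if b = a then 1 else 0)"

definition hbasis :: "('k::field) hopf_data \<Rightarrow> 'k vec set" where
  "hbasis H = {bvec (n,k) | n k. k < hdim H n}"

definition hbasis_deg :: "('k::field) hopf_data \<Rightarrow> nat \<Rightarrow> 'k vec set" where
  "hbasis_deg H n = {bvec (n,k) | k. k < hdim H n}"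

text \<open>\<open>dot (basis_idx H n)\<close> is the pairing of \<open>H\<^sup>n\<close> with \<open>L\<^sup>n = (H\<^sup>n)\<^sup>*\<close> in dual bases.\<close>

definition basis_idx :: "'k hopf_data \<Rightarrow> nat \<Rightarrow> (nat \<times> nat) set" where
  "basis_idx H n = Pair n ` {..<hdim H n}"

definition deg_part :: "nat \<Rightarrow> 'k vec \<Rightarrow> ('k::zero) vec" where
  "deg_part n x = (\<lambda>z. if fst z = n then x z else 0)"

lemma carrier_H_iff:
  "x \<in> carrier_H H \<longleftrightarrow> (\<forall>n k. hdim H n \<le> k \<longrightarrow> x (n,k) = 0) \<and> finite {a. x a \<noteq> 0}"
  unfolding carrier_H_def valid_idx_def by (auto simp: not_less)

lemma carrier_H_outside: "x \<in> carrier_H H \<Longrightarrow> hdim H n \<le> k \<Longrightarrow> x (n,k) = 0"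
  by (simp add: carrier_H_iff)

lemma carrier_H_bounded_degree: "x \<in> carrier_H H \<Longrightarrow> \<exists>M. \<forall>n k. M < n \<longrightarrow> x (n,k) = 0"
proof -
  assume "x \<in> carrier_H H"
  then have "finite (fst ` {a. x a \<noteq> 0})" by (simp add: carrier_H_iff)
  then obtain M where M: "\<forall>n\<in>fst ` {a. x a \<noteq> 0}. n \<le> M"
    using finite_nat_set_iff_bounded_le by blast
  have "x (n,k) = 0" if "M < n" for n k
  proof (rule ccontr)
    assume "x (n,k) \<noteq> 0"
    then have "n \<in> fst ` {a. x a \<noteq> 0}" by (intro image_eqI[where x = "(n,k)"]) auto
    then show False using M that by auto
  qed
  then show ?thesis by blast
qed

lemma carrier_HI:
  assumes "\<And>n k. hdim H n \<le> k \<Longrightarrow> x (n,k) = 0" and "\<And>n k. M < n \<Longrightarrow> x (n,k) = 0"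
  shows "x \<in> carrier_H H"
proof -
  have "{a. x a \<noteq> 0} \<subseteq> Sigma {..M} (\<lambda>n. {..<hdim H n})"
  proof
    fix a assume "a \<in> {a. x a \<noteq> 0}"
    then show "a \<in> Sigma {..M} (\<lambda>n. {..<hdim H n})"
      using assms by (cases a) (auto simp: not_le not_less[symmetric])
  qed
  then have "finite {a. x a \<noteq> 0}"
    by (rule finite_subset) auto
  then show ?thesis using assms(1) by (simp add: carrier_H_iff)
qed

lemma subspace_carrier_H: "fv.subspace (carrier_H H)"
proof (unfold fv.subspace_def, intro conjI ballI allI)
  show "0 \<in> carrier_H H" by (simp add: carrier_H_iff zero_fun_def)
next
  fix x y assume x: "x \<in> carrier_H H" and y: "y \<in> carrier_H H"
  obtain M1 where M1: "\<forall>n k. M1 < n \<longrightarrow> x (n,k) = 0" using carrier_H_bounded_degree[OF x] by blast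
  obtain M2 where M2: "\<forall>n k. M2 < n \<longrightarrow> y (n,k) = 0" using carrier_H_bounded_degree[OF y] by blast
  show "x + y \<in> carrier_H H"
    by (rule carrier_HI[where M = "max M1 M2"]) (use x y M1 M2 in \<open>auto simp: carrier_H_outside\<close>)
next
  fix c x assume x: "x \<in> carrier_H H"
  obtain M where M: "\<forall>n k. M < n \<longrightarrow> x (n,k) = 0" using carrier_H_bounded_degree[OF x] by blast
  show "(\<lambda>a. c * x a) \<in> carrier_H H"
    by (rule carrier_HI[where M = M]) (use x M in \<open>auto simp: carrier_H_outside\<close>)
qed

lemma zero_carrier_H [simp]: "(\<lambda>_. 0) \<in> carrier_H H"
  by (simp add: carrier_H_iff)

lemma restrict_carrier_H: "f \<in> carrier_H H \<Longrightarrow> (\<lambda>a. if P a then f a else 0) \<in> carrier_H H"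
  unfolding carrier_H_iff by (auto elim: finite_subset[rotated])

lemma hcomp_iff: "x \<in> hcomp H n \<longleftrightarrow> x \<in> carrier_H H \<and> (\<forall>m i. m \<noteq> n \<longrightarrow> x (m,i) = 0)"
  unfolding hcomp_def by simp

lemma subspace_hcomp: "fv.subspace (hcomp H n)"
proof (unfold fv.subspace_def, intro conjI ballI allI)
  show "0 \<in> hcomp H n" using fv.subspace_0[OF subspace_carrier_H[of H]] by (simp add: hcomp_iff)
next
  fix x y assume "x \<in> hcomp H n" "y \<in> hcomp H n"
  then show "x + y \<in> hcomp H n" using fv.subspace_add[OF subspace_carrier_H[of H]] by (simp add: hcomp_iff)
next
  fix c x assume "x \<in> hcomp H n"
  then show "(\<lambda>a. c * x a) \<in> hcomp H n"
    using fv.subspace_scale[OF subspace_carrier_H[of H]] by (simp add: hcomp_iff)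
qed

lemma hcomp_outside_basis_idx:
  assumes x: "x \<in> hcomp H n" and z: "z \<notin> basis_idx H n"
  shows "x z = 0"
proof -
  obtain m k where z_eq: "z = (m,k)" by (cases z)
  show ?thesis
  proof (cases "m = n")
    case True
    then have "hdim H n \<le> k" using z z_eq by (auto simp: basis_idx_def)
    then show ?thesis using x True z_eq carrier_H_outside[of x H n k] by (simp add: hcomp_iff)
  next
    case False
    then show ?thesis using x z_eq by (simp add: hcomp_iff)
  qed
qed

lemma hcomp_eq_0I:
  assumes x: "x \<in> hcomp H n" and coords: "\<And>k. k < hdim H n \<Longrightarrow> x (n,k) = 0"
  shows "x = (\<lambda>_. 0)"
proof
  fix z :: "nat \<times> nat"
  show "x z = 0"
  proof (cases "z \<in> basis_idx H n")
    case True
    then show ?thesis using coords by (auto simp: basis_idx_def)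
  next
    case False
    then show ?thesis by (rule hcomp_outside_basis_idx[OF x])
  qed
qed

lemma gdual_simps [simp]:
  "hdim (gdual H) = hdim H" "hmu (gdual H) = hde H" "hde (gdual H) = hmu H"
  "hun (gdual H) = hcu H" "hcu (gdual H) = hun H"
  by (simp_all add: gdual_def)

lemma carrier_H_gdual [simp]: "carrier_H (gdual H) = carrier_H H"
  unfolding carrier_H_def valid_idx_def by simp

lemma hcomp_gdual [simp]: "hcomp (gdual H) n = hcomp H n"
  unfolding hcomp_def by simp

lemma bvec_hcomp: "k < hdim H n \<Longrightarrow> bvec (n,k) \<in> hcomp H n"
  unfolding hcomp_iff by (intro conjI carrier_HI[where M = n]) (auto simp: bvec_def)

lemma bvec_carrier_H: "k < hdim H n \<Longrightarrow> bvec (n,k) \<in> carrier_H H"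
  using bvec_hcomp hcomp_iff by blast

lemma sum_bvec: "(\<Sum>k'<M. f k' * bvec (m,k') (n,k)) = (if m = n \<and> k < M then f k else 0)"
proof -
  have "(\<Sum>k'<M. f k' * bvec (m,k') (n,k)) = (\<Sum>k'<M. if k' = k then (if m = n then f k' else 0) else 0)"
    by (rule sum.cong) (auto simp: bvec_def)
  then show ?thesis by (simp add: sum.delta')
qed

lemma sum_bvec': "(\<Sum>k'<M. bvec (n,k) (m,k') * f k') = (if m = n \<and> k < M then f k else 0)"
proof -
  have "(\<Sum>k'<M. bvec (n,k) (m,k') * f k') = (\<Sum>k'<M. if k' = k then (if m = n then f k' else 0) else 0)"
    by (rule sum.cong) (auto simp: bvec_def)
  then show ?thesis by (simp add: sum.delta')
qed

lemma carrier_H_basis_expansion: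
  "x \<in> carrier_H H \<Longrightarrow> x = (\<Sum>a\<in>{a. x a \<noteq> 0}. (\<lambda>b. x a * bvec a b))"
  unfolding carrier_H_iff by (auto simp: fun_eq_iff sum_apply bvec_def if_distrib cong: if_cong)

lemma carrier_H_span_hbasis: "x \<in> carrier_H H \<Longrightarrow> x \<in> fv.span (hbasis H)"
proof -
  assume x: "x \<in> carrier_H H"
  have "(\<Sum>a\<in>{a. x a \<noteq> 0}. (\<lambda>b. x a * bvec a b)) \<in> fv.span (hbasis H)"
  proof (rule fv.span_sum, rule fv.span_scale, rule fv.span_base)
    fix a assume a: "a \<in> {a. x a \<noteq> 0}"
    obtain m k where mk: "a = (m,k)" by (cases a)
    have "k < hdim H m" using a mk carrier_H_outside[OF x, of m k] by (cases "k < hdim H m") auto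
    then show "bvec a \<in> hbasis H" unfolding hbasis_def mk by blast
  qed
  then show ?thesis using carrier_H_basis_expansion[OF x] by simp
qed

lemma hcomp_span_hbasis_deg: "x \<in> hcomp H n \<Longrightarrow> x \<in> fv.span (hbasis_deg H n)"
proof -
  assume x: "x \<in> hcomp H n"
  then have xc: "x \<in> carrier_H H" by (simp add: hcomp_iff)
  have "(\<Sum>a\<in>{a. x a \<noteq> 0}. (\<lambda>b. x a * bvec a b)) \<in> fv.span (hbasis_deg H n)"
  proof (rule fv.span_sum, rule fv.span_scale, rule fv.span_base)
    fix a assume a: "a \<in> {a. x a \<noteq> 0}"
    obtain m k where mk: "a = (m,k)" by (cases a)
    have "m = n" using a x mk by (auto simp: hcomp_iff)
    moreover have "k < hdim H m" using a mk carrier_H_outside[OF xc, of m k] by (cases "k < hdim H m") auto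
    ultimately show "bvec a \<in> hbasis_deg H n" unfolding hbasis_deg_def mk by blast
  qed
  then show ?thesis using carrier_H_basis_expansion[OF xc] by simp
qed

lemma finite_hbasis_deg: "finite (hbasis_deg H n)"
proof -
  have "hbasis_deg H n = (\<lambda>k. bvec (n,k)) ` {..<hdim H n}" unfolding hbasis_deg_def by auto
  then show ?thesis by simp
qed

lemma deg_part_hcomp: "x \<in> carrier_H H \<Longrightarrow> deg_part n x \<in> hcomp H n"
  unfolding deg_part_def hcomp_iff by (auto intro: restrict_carrier_H)

lemma deg_part_hcomp_self: "x \<in> hcomp H n \<Longrightarrow> deg_part n x = x"
  by (auto simp: deg_part_def fun_eq_iff hcomp_iff)

lemma deg_part_hcomp_other: "x \<in> hcomp H m \<Longrightarrow> m \<noteq> n \<Longrightarrow> deg_part n x = 0"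
  by (auto simp: deg_part_def fun_eq_iff hcomp_iff)

lemma dot_bvec: "k < hdim H n \<Longrightarrow> dot (basis_idx H n) c (bvec (n,k)) = c (n,k)"
  unfolding dot_def basis_idx_def bvec_def
  by (subst sum.reindex) (auto simp: inj_on_def if_distrib sum.delta' cong: if_cong)

lemma exists_separating_dot_hcomp:
  assumes S: "S \<subseteq> hcomp H n" and v: "v \<in> hcomp H n" "v \<notin> fv.span S"
  shows "\<exists>c\<in>hcomp H n. (\<forall>s\<in>S. dot (basis_idx H n) c s = 0) \<and> dot (basis_idx H n) c v \<noteq> 0"
proof -
  have "w z = 0" if "w \<in> insert v S" "z \<notin> basis_idx H n" for w z
    using that v S hcomp_outside_basis_idx[of w H n z] by blast
  then obtain c where c: "\<forall>s\<in>S. dot (basis_idx H n) c s = 0" "dot (basis_idx H n) c v \<noteq> 0"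
    using exists_separating_dot[of "basis_idx H n" v S] v by (auto simp: basis_idx_def)
  define c' where "c' = (\<lambda>z. if z \<in> basis_idx H n then c z else 0)"
  have "c' \<in> hcomp H n"
    unfolding hcomp_iff by (intro conjI allI impI carrier_HI[where M = n]) (auto simp: c'_def basis_idx_def)
  moreover have "dot (basis_idx H n) c' = dot (basis_idx H n) c"
    unfolding dot_def c'_def by (auto intro!: ext sum.cong)
  ultimately show ?thesis using c by (intro bexI[of _ c']) auto
qed

lemma mult_eval: "mult H x y (n,k) = (if k < hdim H n then
   (\<Sum>p\<le>n. \<Sum>i<hdim H p. \<Sum>j<hdim H (n-p). x (p,i) * y (n-p,j) * hmu H p i (n-p) j k) else 0)"
  by (simp add: mult_def mult_t_def tensor_def)

lemma mult_add_left: "mult H (\<lambda>a. x a + x' a) y = (\<lambda>a. mult H x y a + mult H x' y a)"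
  by (auto simp: fun_eq_iff mult_eval algebra_simps sum.distrib)

lemma mult_add_right: "mult H y (\<lambda>a. x a + x' a) = (\<lambda>a. mult H y x a + mult H y x' a)"
  by (auto simp: fun_eq_iff mult_eval algebra_simps sum.distrib)

lemma mult_diff_left: "mult H (\<lambda>z. x z - y z) w = (\<lambda>z. mult H x w z - mult H y w z)"
  by (auto simp: fun_eq_iff mult_eval algebra_simps sum_subtractf)

lemma mult_diff_right: "mult H w (\<lambda>z. x z - y z) = (\<lambda>z. mult H w x z - mult H w y z)"
  by (auto simp: fun_eq_iff mult_eval algebra_simps sum_subtractf)

lemma mult_scale_left: "mult H (\<lambda>a. c * x a) y = (\<lambda>a. c * mult H x y a)"
  by (auto simp: fun_eq_iff mult_eval algebra_simps sum_distrib_left)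

lemma mult_scale_right: "mult H y (\<lambda>a. c * x a) = (\<lambda>a. c * mult H y x a)"
  by (auto simp: fun_eq_iff mult_eval algebra_simps sum_distrib_left)

lemma mult_zero_fun_left: "mult H (\<lambda>_. 0) y = (\<lambda>_. 0)"
  by (auto simp: fun_eq_iff mult_eval)

lemma mult_zero_fun_right: "mult H y (\<lambda>_. 0) = (\<lambda>_. 0)"
  by (auto simp: fun_eq_iff mult_eval)

lemma mult_sum_left: "mult H (\<Sum>a\<in>S. f a) y = (\<Sum>a\<in>S. mult H (f a) y)"
  by (induct S rule: infinite_finite_induct) (auto simp: mult_zero_fun_left mult_add_left zero_fun_def plus_fun_def)

lemma mult_sum_right: "mult H y (\<Sum>a\<in>S. f a) = (\<Sum>a\<in>S. mult H y (f a))"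
  by (induct S rule: infinite_finite_induct) (auto simp: mult_zero_fun_right mult_add_right zero_fun_def plus_fun_def)

lemma mult_carrier_H:
  assumes x: "x \<in> carrier_H H" and y: "y \<in> carrier_H H"
  shows "mult H x y \<in> carrier_H H"
proof -
  obtain M1 where M1: "\<forall>n k. M1 < n \<longrightarrow> x (n,k) = 0" using carrier_H_bounded_degree[OF x] by blast
  obtain M2 where M2: "\<forall>n k. M2 < n \<longrightarrow> y (n,k) = 0" using carrier_H_bounded_degree[OF y] by blast
  show ?thesis
  proof (rule carrier_HI[where M = "M1 + M2"])
    fix n k assume "hdim H n \<le> k" then show "mult H x y (n,k) = 0" by (simp add: mult_eval)
  next
    fix n k assume n: "M1 + M2 < n"
    have z: "x (p,i) * y (n-p,j) * c = 0" if "p \<le> n" for p i j c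
    proof (cases "p \<le> M1")
      case True then have "M2 < n - p" using n that by linarith
      then show ?thesis using M2 by simp
    next
      case False then show ?thesis using M1 by simp
    qed
    show "mult H x y (n,k) = 0" by (simp add: mult_eval z)
  qed
qed

lemma mult_hcomp:
  assumes x: "x \<in> hcomp H a" and y: "y \<in> hcomp H b"
  shows "mult H x y \<in> hcomp H (a+b)"
  unfolding hcomp_iff
proof (intro conjI allI impI)
  show "mult H x y \<in> carrier_H H" using x y by (intro mult_carrier_H) (auto simp: hcomp_iff)
next
  fix m i assume m: "m \<noteq> a + b"
  have z: "x (p,i') * y (m-p,j) * c = 0" if "p \<le> m" for p i' j c
  proof (cases "p = a")
    case True then have "m - p \<noteq> b" using m that by linarith
    then show ?thesis using y by (simp add: hcomp_iff)
  next
    case False then show ?thesis using x by (simp add: hcomp_iff)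
  qed
  show "mult H x y (m,i) = 0" by (simp add: mult_eval z)
qed

lemma mult_bvec: "mult H (bvec (p,i)) (bvec (q,j)) (m,k) =
   (if m = p+q \<and> k < hdim H m \<and> i < hdim H p \<and> j < hdim H q then hmu H p i q j k else 0)"
proof (cases "k < hdim H m")
  case False then show ?thesis by (simp add: mult_eval)
next
  case True
  have "mult H (bvec (p,i)) (bvec (q,j)) (m,k) =
    (\<Sum>p'\<le>m. \<Sum>i'<hdim H p'. \<Sum>j'<hdim H (m-p'). bvec (p,i) (p',i') * bvec (q,j) (m-p',j') * hmu H p' i' (m-p') j' k)"
    using True by (simp add: mult_eval)
  also have "\<dots> = (\<Sum>p'\<le>m. if p' = p then (\<Sum>i'<hdim H p'. \<Sum>j'<hdim H (m-p'). bvec (p,i) (p',i') * bvec (q,j) (m-p',j') * hmu H p' i' (m-p') j' k) else 0)"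
    by (rule sum.cong) (auto simp: bvec_def)
  also have "\<dots> = (if p \<le> m then (\<Sum>i'<hdim H p. \<Sum>j'<hdim H (m-p). bvec (p,i) (p,i') * bvec (q,j) (m-p,j') * hmu H p i' (m-p) j' k) else 0)"
    by (simp add: sum.delta')
  also have "\<dots> = (if p \<le> m then (\<Sum>i'<hdim H p. if i' = i then (\<Sum>j'<hdim H (m-p). bvec (q,j) (m-p,j') * hmu H p i' (m-p) j' k) else 0) else 0)"
    by (rule if_cong[OF refl _ refl], rule sum.cong[OF refl]) (simp add: bvec_def)
  also have "\<dots> = (if p \<le> m \<and> i < hdim H p then (\<Sum>j'<hdim H (m-p). bvec (q,j) (m-p,j') * hmu H p i (m-p) j' k) else 0)"
    by (simp add: sum.delta')
  also have "\<dots> = (if p \<le> m \<and> i < hdim H p then (\<Sum>j'<hdim H (m-p). if j' = j then (if m - p = q then hmu H p i (m-p) j' k else 0) else 0) else 0)"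
    by (rule if_cong[OF refl _ refl], rule sum.cong[OF refl]) (auto simp: bvec_def)
  also have "\<dots> = (if m = p+q \<and> k < hdim H m \<and> i < hdim H p \<and> j < hdim H q then hmu H p i q j k else 0)"
    using True by (auto simp: sum.delta')
  finally show ?thesis .
qed

lemma mult_bvec_expansion: "mult H (bvec (p,i)) (bvec (q,j)) =
   (\<Sum>m<hdim H (p+q). (\<lambda>z. (if i < hdim H p \<and> j < hdim H q then hmu H p i q j m else 0) * bvec (p+q,m) z))"
proof
  fix z :: "nat \<times> nat"
  obtain n k where z: "z = (n,k)" by (cases z)
  show "mult H (bvec (p,i)) (bvec (q,j)) z = (\<Sum>m<hdim H (p+q).
      (\<lambda>z. (if i < hdim H p \<and> j < hdim H q then hmu H p i q j m else 0) * bvec (p+q,m) z)) z"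
    unfolding z sum_apply mult_bvec sum_bvec by auto
qed

lemma one_hcomp: "one H \<in> hcomp H 0"
  unfolding hcomp_iff by (intro conjI carrier_HI[where M = 0]) (auto simp: one_def)

lemma one_expansion: "one H = (\<Sum>i<hdim H 0. (\<lambda>z. hun H i * bvec (0,i) z))"
proof
  fix z :: "nat \<times> nat"
  obtain n k where z: "z = (n,k)" by (cases z)
  show "one H z = (\<Sum>i<hdim H 0. (\<lambda>z. hun H i * bvec (0,i) z)) z"
    unfolding z sum_apply sum_bvec by (auto simp: one_def)
qed

lemma comul_eval: "comul H v ((p,i),(q,j)) = (if i < hdim H p \<and> j < hdim H q then
    (\<Sum>k<hdim H (p+q). v (p+q,k) * hde H p i q j k) else 0)"
  by (simp add: comul_def)

lemma comul_eq_0_if_deg_vanishes: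
  "(\<And>k. v (p+q,k) = 0) \<Longrightarrow> comul H v ((p,i),(q,j)) = 0"
  by (simp add: comul_eval)

lemma comul_hcomp0:
  assumes "x \<in> hcomp H 0" "p \<noteq> 0 \<or> q \<noteq> 0"
  shows "comul H' x ((p,i),(q,j)) = 0"
  using assms by (intro comul_eq_0_if_deg_vanishes) (auto simp: hcomp_iff)

lemma comul_deg_part:
  "comul H (deg_part n x) ((p,i),(q,j)) = (if p + q = n then comul H x ((p,i),(q,j)) else 0)"
  by (simp add: comul_eval deg_part_def)

lemma comul_bvec: "comul H (bvec (n,k)) ((p,i),(q,j)) =
   (if i < hdim H p \<and> j < hdim H q \<and> p + q = n \<and> k < hdim H n then hde H p i q j k else 0)"
  unfolding comul_eval sum_bvec' by auto

lemma finite_comul_support: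
  assumes x: "x \<in> carrier_H H" shows "finite {z. comul H x z \<noteq> 0}"
proof -
  obtain M where M: "\<forall>n k. M < n \<longrightarrow> x (n,k) = 0" using carrier_H_bounded_degree[OF x] by blast
  define S where "S = Sigma {..M} (\<lambda>n. {..<hdim H n})"
  have "{z. comul H x z \<noteq> 0} \<subseteq> S \<times> S"
  proof
    fix z assume z: "z \<in> {z. comul H x z \<noteq> 0}"
    obtain p i q j where zz: "z = ((p,i),(q,j))" by (metis prod.exhaust)
    have ne: "comul H x ((p,i),(q,j)) \<noteq> 0" using z zz by simp
    then have ij: "i < hdim H p" "j < hdim H q" by (auto simp: comul_eval split: if_splits)
    have "p + q \<le> M"
    proof (rule ccontr)
      assume "\<not> p + q \<le> M"
      then have "comul H x ((p,i),(q,j)) = 0" using M by (intro comul_eq_0_if_deg_vanishes) auto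
      then show False using ne by simp
    qed
    then show "z \<in> S \<times> S" using ij unfolding zz S_def by auto
  qed
  moreover have "finite (S \<times> S)" unfolding S_def by auto
  ultimately show ?thesis by (rule finite_subset)
qed

lemma comul_col_carrier_H:
  assumes x: "x \<in> carrier_H H" shows "(\<lambda>a. comul H x (a,b)) \<in> carrier_H H"
proof -
  obtain M where M: "\<forall>n k. M < n \<longrightarrow> x (n,k) = 0" using carrier_H_bounded_degree[OF x] by blast
  obtain q j where b: "b = (q,j)" by (cases b)
  show ?thesis unfolding b
  proof (rule carrier_HI[where M = M])
    fix n k assume "hdim H n \<le> k" then show "comul H x ((n,k),(q,j)) = 0" by (simp add: comul_eval)
  next
    fix n k assume "M < n" then show "comul H x ((n,k),(q,j)) = 0"
      using M by (intro comul_eq_0_if_deg_vanishes) auto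
  qed
qed

lemma comul_row_carrier_H:
  assumes x: "x \<in> carrier_H H" shows "(\<lambda>b. comul H x (a,b)) \<in> carrier_H H"
proof -
  obtain M where M: "\<forall>n k. M < n \<longrightarrow> x (n,k) = 0" using carrier_H_bounded_degree[OF x] by blast
  obtain p i where a: "a = (p,i)" by (cases a)
  show ?thesis unfolding a
  proof (rule carrier_HI[where M = M])
    fix n k assume "hdim H n \<le> k" then show "comul H x ((p,i),(n,k)) = 0" by (simp add: comul_eval)
  next
    fix n k assume "M < n" then show "comul H x ((p,i),(n,k)) = 0"
      using M by (intro comul_eq_0_if_deg_vanishes) auto
  qed
qed

lemma comul_gdual_gdual [simp]: "comul (gdual (gdual H)) = comul H"
  unfolding comul_def[abs_def] by (simp cong: if_cong)

definition mult_assoc :: "('k::field) hopf_data \<Rightarrow> bool" where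
  "mult_assoc H \<longleftrightarrow> (\<forall>u\<in>carrier_H H. \<forall>v\<in>carrier_H H. \<forall>w\<in>carrier_H H.
     mult H (mult H u v) w = mult H u (mult H v w))"

lemma graded_hopf_mult_assoc: "graded_hopf H \<Longrightarrow> mult_assoc H"
  unfolding graded_hopf_def mult_assoc_def by blast

lemma graded_hopf_unit:
  "graded_hopf H \<Longrightarrow> v \<in> carrier_H H \<Longrightarrow> mult H (one H) v = v \<and> mult H v (one H) = v"
  unfolding graded_hopf_def by blast

lemma graded_hopf_coassoc:
  "graded_hopf H \<Longrightarrow> v \<in> carrier_H H \<Longrightarrow> comul_l H (comul H v) = comul_r H (comul H v)"
  unfolding graded_hopf_def by blast

section \<open>Coradically graded: the first term of the coradical filtration\<close>

lemma comul_vanishes_if_mem_filtration_sum: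
  assumes "comul H x \<in> ssum (tens_span (carrier_H H) (hcomp H 0)) (tens_span (hcomp H 0) (carrier_H H))"
    and pq: "0 < p" "0 < q"
  shows "comul H x ((p,i),(q,j)) = 0"
proof -
  obtain s t where st: "s \<in> tens_span (carrier_H H) (hcomp H 0)" "t \<in> tens_span (hcomp H 0) (carrier_H H)"
    "comul H x = (\<lambda>z. s z + t z)" using assms(1) unfolding ssum_def by blast
  have "(\<lambda>b. s ((p,i),b)) \<in> hcomp H 0"
    using st(1) unfolding tens_span_eq_span by (rule tensor_span_row[OF _ subspace_hcomp])
  then have "s ((p,i),(q,j)) = 0" using pq by (simp add: hcomp_iff)
  moreover have "(\<lambda>a. t (a,(q,j))) \<in> hcomp H 0"
    using st(2) unfolding tens_span_eq_span by (rule tensor_span_col[OF _ subspace_hcomp])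
  then have "t ((p,i),(q,j)) = 0" using pq by (simp add: hcomp_iff)
  ultimately show ?thesis using st(3) by (simp add: fun_eq_iff)
qed

lemma comul_mem_filtration_sum:
  assumes x: "x \<in> carrier_H H"
    and vanish: "\<And>p q i j. 0 < p \<Longrightarrow> 0 < q \<Longrightarrow> comul H x ((p,i),(q,j)) = 0"
  shows "comul H x \<in> ssum (tens_span (carrier_H H) (hcomp H 0)) (tens_span (hcomp H 0) (carrier_H H))"
proof -
  define s where "s = (\<lambda>z. if fst (snd z) = 0 then comul H x z else 0)"
  define t where "t = (\<lambda>z. if fst (snd z) \<noteq> 0 then comul H x z else 0)"
  have fin: "finite {z. comul H x z \<noteq> 0}" by (rule finite_comul_support[OF x])
  have "s \<in> tens_span (carrier_H H) (hcomp H 0)" unfolding tens_span_eq_span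
  proof (rule tensor_spanI[OF subspace_carrier_H subspace_hcomp])
    show "finite {z. s z \<noteq> 0}" by (rule finite_subset[OF _ fin]) (auto simp: s_def)
  next
    fix b show "(\<lambda>a. s (a,b)) \<in> carrier_H H"
      unfolding s_def using comul_col_carrier_H[OF x, of b] by (cases "fst b = 0") auto
  next
    fix a show "(\<lambda>b. s (a,b)) \<in> hcomp H 0"
      using deg_part_hcomp[OF comul_row_carrier_H[OF x], of 0 a] by (simp add: s_def deg_part_def)
  qed
  moreover have "t \<in> tens_span (hcomp H 0) (carrier_H H)" unfolding tens_span_eq_span
  proof (rule tensor_spanI[OF subspace_hcomp subspace_carrier_H])
    show "finite {z. t z \<noteq> 0}" by (rule finite_subset[OF _ fin]) (auto simp: t_def)
  next
    fix b :: "nat \<times> nat"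
    have "(\<lambda>a. t (a,b)) = deg_part 0 (\<lambda>a. if fst b \<noteq> 0 then comul H x (a,b) else 0)"
      unfolding t_def deg_part_def using vanish by (cases b) (auto simp: fun_eq_iff)
    moreover have "(\<lambda>a. if fst b \<noteq> 0 then comul H x (a,b) else 0) \<in> carrier_H H"
      using comul_col_carrier_H[OF x, of b] by (cases "fst b = 0") auto
    ultimately show "(\<lambda>a. t (a,b)) \<in> hcomp H 0" using deg_part_hcomp by metis
  next
    fix a show "(\<lambda>b. t (a,b)) \<in> carrier_H H"
      unfolding t_def using restrict_carrier_H[OF comul_row_carrier_H[OF x], of "\<lambda>b. fst b \<noteq> 0" a]
      by simp
  qed
  moreover have "comul H x = (\<lambda>z. s z + t z)" by (auto simp: fun_eq_iff s_def t_def)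
  ultimately show ?thesis unfolding ssum_def by blast
qed

lemma corad_filt_1_iff:
  assumes "coradical H = hcomp H 0"
  shows "x \<in> corad_filt H 1 \<longleftrightarrow> x \<in> carrier_H H \<and>
    (\<forall>p q i j. 0 < p \<longrightarrow> 0 < q \<longrightarrow> comul H x ((p,i),(q,j)) = 0)"
  using assms comul_vanishes_if_mem_filtration_sum[of H x] comul_mem_filtration_sum[of x H] by auto

lemma ssum_hcomp_0_1:
  "ssum (hcomp H 0) (hcomp H 1) = {x \<in> carrier_H H. \<forall>m i. 2 \<le> m \<longrightarrow> x (m,i) = 0}"
proof
  show "ssum (hcomp H 0) (hcomp H 1) \<subseteq> {x \<in> carrier_H H. \<forall>m i. 2 \<le> m \<longrightarrow> x (m,i) = 0}"
  proof
    fix x assume "x \<in> ssum (hcomp H 0) (hcomp H 1)"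
    then obtain a b where ab: "a \<in> hcomp H 0" "b \<in> hcomp H 1" "x = (\<lambda>z. a z + b z)"
      unfolding ssum_def by blast
    have "a + b \<in> carrier_H H"
      by (intro fv.subspace_add[OF subspace_carrier_H]) (use ab in \<open>auto simp: hcomp_iff\<close>)
    then show "x \<in> {x \<in> carrier_H H. \<forall>m i. 2 \<le> m \<longrightarrow> x (m,i) = 0}"
      using ab by (auto simp: hcomp_iff plus_fun_def)
  qed
next
  show "{x \<in> carrier_H H. \<forall>m i. 2 \<le> m \<longrightarrow> x (m,i) = 0} \<subseteq> ssum (hcomp H 0) (hcomp H 1)"
  proof
    fix x assume x: "x \<in> {x \<in> carrier_H H. \<forall>m i. 2 \<le> m \<longrightarrow> x (m,i) = 0}"
    have "deg_part 0 x \<in> hcomp H 0" "deg_part 1 x \<in> hcomp H 1"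
      using x by (auto intro: deg_part_hcomp)
    moreover have "x = (\<lambda>z. deg_part 0 x z + deg_part 1 x z)"
    proof
      fix z :: "nat \<times> nat"
      show "x z = deg_part 0 x z + deg_part 1 x z"
        using x by (cases z) (auto simp: deg_part_def not_less_eq_eq)
    qed
    ultimately show "x \<in> ssum (hcomp H 0) (hcomp H 1)" unfolding ssum_def by blast
  qed
qed

definition inner_comul_injective :: "('k::field) hopf_data \<Rightarrow> bool" where
  "inner_comul_injective H \<longleftrightarrow> (\<forall>n\<ge>2. \<forall>x\<in>hcomp H n.
     (\<forall>p q i j. 0 < p \<longrightarrow> 0 < q \<longrightarrow> comul H x ((p,i),(q,j)) = 0) \<longrightarrow> x = (\<lambda>_. 0))"

lemma coeff_eq_0_if_inner_comul_injective:
  assumes inj: "inner_comul_injective H" and x: "x \<in> carrier_H H"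
    and vanish: "\<And>p q i j. 0 < p \<Longrightarrow> 0 < q \<Longrightarrow> comul H x ((p,i),(q,j)) = 0"
    and m: "2 \<le> m"
  shows "x (m,i) = 0"
proof -
  have "\<forall>p q i j. 0 < p \<longrightarrow> 0 < q \<longrightarrow> comul H (deg_part m x) ((p,i),(q,j)) = 0"
    by (simp add: comul_deg_part vanish)
  then have "deg_part m x = (\<lambda>_. 0)"
    using inj m deg_part_hcomp[OF x, of m] unfolding inner_comul_injective_def by blast
  from fun_cong[OF this, of "(m,i)"] show ?thesis by (simp add: deg_part_def)
qed

lemma coradically_graded_iff_inner_comul_injective:
  assumes cor: "coradical H = hcomp H 0"
  shows "coradically_graded H \<longleftrightarrow> inner_comul_injective H"
proof -
  let ?C1 = "{x \<in> carrier_H H. \<forall>m i. 2 \<le> m \<longrightarrow> x (m,i) = 0}"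
  have "coradically_graded H \<longleftrightarrow> corad_filt H 1 = ?C1"
    unfolding coradically_graded_def ssum_hcomp_0_1 using cor by simp
  also have "\<dots> \<longleftrightarrow> inner_comul_injective H"
  proof
    assume C1: "corad_filt H 1 = ?C1"
    show "inner_comul_injective H" unfolding inner_comul_injective_def
    proof (intro allI impI ballI)
      fix n x assume n: "2 \<le> n" and x: "x \<in> hcomp H n"
        and vanish: "\<forall>p q i j. 0 < p \<longrightarrow> 0 < q \<longrightarrow> comul H x ((p,i),(q,j)) = 0"
      have "x \<in> corad_filt H 1"
        unfolding corad_filt_1_iff[OF cor] using x vanish by (simp add: hcomp_iff)
      then show "x = (\<lambda>_. 0)"
        using C1 n by (intro hcomp_eq_0I[OF x]) auto
    qed
  next
    assume inj: "inner_comul_injective H"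
    show "corad_filt H 1 = ?C1"
    proof (intro set_eqI iffI)
      fix x assume "x \<in> corad_filt H 1"
      then show "x \<in> ?C1"
        using coeff_eq_0_if_inner_comul_injective[OF inj] unfolding corad_filt_1_iff[OF cor] by blast
    next
      fix x assume "x \<in> ?C1"
      then show "x \<in> corad_filt H 1"
        unfolding corad_filt_1_iff[OF cor] by (auto intro!: comul_eq_0_if_deg_vanishes)
    qed
  qed
  finally show ?thesis .
qed

section \<open>Generation in degrees 0 and 1\<close>

definition lower_products :: "('k::field) hopf_data \<Rightarrow> nat \<Rightarrow> 'k vec set" where
  "lower_products H n = {mult H (bvec (p,i)) (bvec (q,j)) | p i q j.
     0 < p \<and> 0 < q \<and> p + q = n \<and> i < hdim H p \<and> j < hdim H q}"

definition spanned_by_lower_products :: "('k::field) hopf_data \<Rightarrow> bool" where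
  "spanned_by_lower_products H \<longleftrightarrow> (\<forall>n\<ge>2. hcomp H n \<subseteq> fv.span (lower_products H n))"

lemma mult_span_products:
  assumes u: "u \<in> fv.span S" and v: "v \<in> fv.span T"
  shows "mult H u v \<in> fv.span {mult H s t | s t. s \<in> S \<and> t \<in> T}"
proof -
  let ?G = "{mult H s t | s t. s \<in> S \<and> t \<in> T}"
  have L: "mult H s v \<in> fv.span ?G" if s: "s \<in> S" for s
  proof (rule linear_map_span_into_subspace[where f = "mult H s", OF v fv.subspace_span])
    fix t assume "t \<in> T" then show "mult H s t \<in> fv.span ?G" using s by (intro fv.span_base) blast
  qed (simp_all add: mult_add_right mult_scale_right mult_zero_fun_right)
  show ?thesis
    by (rule linear_map_span_into_subspace[where f = "\<lambda>u. mult H u v", OF u fv.subspace_span])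
       (simp_all add: mult_add_left mult_scale_left mult_zero_fun_left L)
qed

lemma mult_hcomp_span_lower_products:
  assumes "0 < p" "0 < q" "u \<in> hcomp H p" "v \<in> hcomp H q"
  shows "mult H u v \<in> fv.span (lower_products H (p+q))"
proof -
  have "mult H u v \<in> fv.span {mult H s t | s t. s \<in> hbasis_deg H p \<and> t \<in> hbasis_deg H q}"
    using assms by (intro mult_span_products hcomp_span_hbasis_deg)
  also have "\<dots> \<subseteq> fv.span (lower_products H (p+q))"
    by (rule fv.span_mono) (use assms in \<open>auto simp: hbasis_deg_def lower_products_def\<close>)
  finally show ?thesis .
qed

lemma mult_hcomp0_span_lower_products_left:
  assumes assoc: "mult_assoc H" and w: "w \<in> hcomp H 0" and v: "v \<in> fv.span (lower_products H n)"
  shows "mult H w v \<in> fv.span (lower_products H n)"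
proof (rule linear_map_span_into_subspace[where f = "mult H w", OF v fv.subspace_span])
  fix g assume "g \<in> lower_products H n"
  then obtain p i q j where g: "g = mult H (bvec (p,i)) (bvec (q,j))" "0 < p" "0 < q" "p + q = n"
    "bvec (p,i) \<in> hcomp H p" "bvec (q,j) \<in> hcomp H q"
    unfolding lower_products_def using bvec_hcomp by blast
  have "mult H w g = mult H (mult H w (bvec (p,i))) (bvec (q,j))"
    using assoc w g(5,6) unfolding g(1) mult_assoc_def by (simp add: hcomp_iff)
  moreover have "mult H w (bvec (p,i)) \<in> hcomp H p" using mult_hcomp[OF w g(5)] by simp
  ultimately show "mult H w g \<in> fv.span (lower_products H n)"
    using mult_hcomp_span_lower_products g by metis
qed (simp_all add: mult_add_right mult_scale_right mult_zero_fun_right)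

lemma mult_hcomp0_span_lower_products_right:
  assumes assoc: "mult_assoc H" and w: "w \<in> hcomp H 0" and v: "v \<in> fv.span (lower_products H n)"
  shows "mult H v w \<in> fv.span (lower_products H n)"
proof (rule linear_map_span_into_subspace[where f = "\<lambda>v. mult H v w", OF v fv.subspace_span])
  fix g assume "g \<in> lower_products H n"
  then obtain p i q j where g: "g = mult H (bvec (p,i)) (bvec (q,j))" "0 < p" "0 < q" "p + q = n"
    "bvec (p,i) \<in> hcomp H p" "bvec (q,j) \<in> hcomp H q"
    unfolding lower_products_def using bvec_hcomp by blast
  have "mult H g w = mult H (bvec (p,i)) (mult H (bvec (q,j)) w)"
    using assoc w g(5,6) unfolding g(1) mult_assoc_def by (simp add: hcomp_iff)
  moreover have "mult H (bvec (q,j)) w \<in> hcomp H q" using mult_hcomp[OF g(6) w] by simp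
  ultimately show "mult H g w \<in> fv.span (lower_products H n)"
    using mult_hcomp_span_lower_products g by metis
qed (simp_all add: mult_add_left mult_scale_left mult_zero_fun_left)

lemma mult_deg_part_eval:
  assumes "p \<le> n"
  shows "mult H (deg_part p x) (deg_part (n-p) y) (n,l) = (if l < hdim H n then
    (\<Sum>i<hdim H p. \<Sum>j<hdim H (n-p). x (p,i) * y (n-p,j) * hmu H p i (n-p) j l) else 0)"
proof -
  have "mult H (deg_part p x) (deg_part (n-p) y) (n,l) = (if l < hdim H n then (\<Sum>p'\<le>n.
     if p' = p then (\<Sum>i<hdim H p'. \<Sum>j<hdim H (n-p'). x (p',i) * y (n-p',j) * hmu H p' i (n-p') j l)
     else 0) else 0)"
    unfolding mult_eval
  proof (rule if_cong[OF refl _ refl], rule sum.cong[OF refl])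
    fix p' assume "p' \<in> {..n}"
    then show "(\<Sum>i<hdim H p'. \<Sum>j<hdim H (n-p'). deg_part p x (p',i) * deg_part (n-p) y (n-p',j) * hmu H p' i (n-p') j l) =
      (if p' = p then (\<Sum>i<hdim H p'. \<Sum>j<hdim H (n-p'). x (p',i) * y (n-p',j) * hmu H p' i (n-p') j l) else 0)"
      using assms by (auto simp: deg_part_def)
  qed
  then show ?thesis using assms by (simp add: sum.delta')
qed

lemma deg_part_mult:
  assumes x: "x \<in> carrier_H H" and y: "y \<in> carrier_H H"
  shows "deg_part n (mult H x y) = (\<Sum>p\<le>n. mult H (deg_part p x) (deg_part (n-p) y))"
proof
  fix z :: "nat \<times> nat"
  obtain m l where z: "z = (m,l)" by (cases z)
  show "deg_part n (mult H x y) z = (\<Sum>p\<le>n. mult H (deg_part p x) (deg_part (n-p) y)) z"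
  proof (cases "m = n")
    case True
    have "(\<Sum>p\<le>n. mult H (deg_part p x) (deg_part (n-p) y)) (n,l)
        = (\<Sum>p\<le>n. mult H (deg_part p x) (deg_part (n-p) y) (n,l))"
      by (rule sum_apply)
    also have "\<dots> = (\<Sum>p\<le>n. if l < hdim H n then
        (\<Sum>i<hdim H p. \<Sum>j<hdim H (n-p). x (p,i) * y (n-p,j) * hmu H p i (n-p) j l) else 0)"
      by (rule sum.cong[OF refl], rule mult_deg_part_eval) simp
    also have "\<dots> = mult H x y (n,l)"
      by (cases "l < hdim H n") (simp_all only: mult_eval if_True if_False sum.neutral_const)
    finally show ?thesis unfolding z True deg_part_def by simp
  next
    case False
    have "(\<Sum>p\<le>n. mult H (deg_part p x) (deg_part (n-p) y)) (m,l)
        = (\<Sum>p\<le>n. mult H (deg_part p x) (deg_part (n-p) y) (m,l))"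
      by (rule sum_apply)
    also have "\<dots> = 0"
    proof (rule sum.neutral, rule ballI)
      fix p assume "p \<in> {..n}"
      then have "mult H (deg_part p x) (deg_part (n-p) y) \<in> hcomp H n"
        using mult_hcomp[OF deg_part_hcomp[OF x] deg_part_hcomp[OF y], of p "n-p"] by simp
      then show "mult H (deg_part p x) (deg_part (n-p) y) (m,l) = 0" using False by (simp add: hcomp_iff)
    qed
    finally show ?thesis unfolding z deg_part_def using False by simp
  qed
qed

lemma bvec_mem_if_spanned_by_lower_products:
  assumes spanned: "spanned_by_lower_products H"
    and A: "subalgebra H A" "hcomp H 0 \<union> hcomp H 1 \<subseteq> A"
  shows "k < hdim H n \<Longrightarrow> bvec (n,k) \<in> A"
proof (induct n arbitrary: k rule: less_induct)
  case (less n)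
  have As: "fv.subspace A" and Am: "\<And>x y. x \<in> A \<Longrightarrow> y \<in> A \<Longrightarrow> mult H x y \<in> A"
    using A(1) unfolding subalgebra_def subspace_iff_fv_subspace by auto
  show ?case
  proof (cases "n < 2")
    case True
    then have "n = 0 \<or> n = 1" by auto
    then show ?thesis using bvec_hcomp[OF less.prems] A(2) by auto
  next
    case False
    have "lower_products H n \<subseteq> A"
    proof
      fix g assume "g \<in> lower_products H n"
      then obtain p i q j where "g = mult H (bvec (p,i)) (bvec (q,j))" "0 < p" "0 < q" "p + q = n"
        "i < hdim H p" "j < hdim H q"
        unfolding lower_products_def by blast
      then show "g \<in> A" using less.hyps Am by simp
    qed
    then have "fv.span (lower_products H n) \<subseteq> A"
      by (rule fv.span_minimal[OF _ As])
    moreover have "bvec (n,k) \<in> fv.span (lower_products H n)"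
      using spanned False bvec_hcomp[OF less.prems] unfolding spanned_by_lower_products_def
      by (meson not_less subsetD)
    ultimately show ?thesis by blast
  qed
qed

lemma generated_by_01_if_spanned_by_lower_products:
  assumes spanned: "spanned_by_lower_products H"
  shows "generated_by_01 H"
  unfolding generated_by_01_def
proof (intro allI impI)
  fix A assume A: "subalgebra H A \<and> hcomp H 0 \<union> hcomp H 1 \<subseteq> A"
  then have "hbasis H \<subseteq> A"
    unfolding hbasis_def using bvec_mem_if_spanned_by_lower_products[OF spanned] by blast
  moreover have "fv.subspace A" "A \<subseteq> carrier_H H"
    using A unfolding subalgebra_def subspace_iff_fv_subspace by auto
  ultimately show "A = carrier_H H"
    using carrier_H_span_hbasis fv.span_minimal by blast
qed

lemma deg_part_mult_span_lower_products:
  assumes assoc: "mult_assoc H" and x: "x \<in> carrier_H H" and y: "y \<in> carrier_H H"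
    and x_span: "\<forall>n\<ge>2. deg_part n x \<in> fv.span (lower_products H n)"
    and y_span: "\<forall>n\<ge>2. deg_part n y \<in> fv.span (lower_products H n)"
    and n: "2 \<le> n"
  shows "deg_part n (mult H x y) \<in> fv.span (lower_products H n)"
  unfolding deg_part_mult[OF x y]
proof (rule fv.span_sum)
  fix p assume "p \<in> {..n}"
  then consider "p = 0" | "p = n" | "0 < p" "p < n" by fastforce
  then show "mult H (deg_part p x) (deg_part (n-p) y) \<in> fv.span (lower_products H n)"
  proof cases
    case 1
    then show ?thesis
      using y_span n by (simp add: mult_hcomp0_span_lower_products_left[OF assoc deg_part_hcomp[OF x]])
  next
    case 2
    then show ?thesis
      using x_span n by (simp add: mult_hcomp0_span_lower_products_right[OF assoc deg_part_hcomp[OF y]])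
  next
    case 3
    then show ?thesis
      using mult_hcomp_span_lower_products[OF _ _ deg_part_hcomp[OF x] deg_part_hcomp[OF y], of p "n-p"]
      by simp
  qed
qed

lemma subalgebra_lower_spanned:
  fixes H :: "('k::field) hopf_data"
  assumes assoc: "mult_assoc H"
  shows "subalgebra H {x \<in> carrier_H H. \<forall>n\<ge>2. deg_part n x \<in> fv.span (lower_products H n)}"
    (is "subalgebra H ?A")
  unfolding subalgebra_def subspace_iff_fv_subspace
proof (intro conjI ballI)
  show "?A \<subseteq> carrier_H H" by blast
next
  show "fv.subspace ?A"
    unfolding fv.subspace_def
  proof (intro conjI ballI allI)
    have "deg_part n (0 :: 'k vec) = 0" for n
      by (simp add: deg_part_def fun_eq_iff)
    then show "0 \<in> ?A"
      using fv.subspace_0[OF subspace_carrier_H[of H]] by (simp add: fv.span_zero)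
  next
    fix x y assume "x \<in> ?A" "y \<in> ?A"
    moreover have "deg_part n (x + y) = deg_part n x + deg_part n y" for n
      by (auto simp: deg_part_def fun_eq_iff)
    ultimately show "x + y \<in> ?A"
      by (auto intro: fv.span_add fv.subspace_add[OF subspace_carrier_H])
  next
    fix c x assume "x \<in> ?A"
    moreover have "deg_part n (\<lambda>a. c * x a) = (\<lambda>a. c * deg_part n x a)" for n
      by (auto simp: deg_part_def fun_eq_iff)
    ultimately show "(\<lambda>a. c * x a) \<in> ?A"
      by (auto intro: fv.span_scale fv.subspace_scale[OF subspace_carrier_H])
  qed
next
  have "deg_part n (one H) = 0" if "2 \<le> n" for n
    using deg_part_hcomp_other[OF one_hcomp[of H]] that by simp
  then show "one H \<in> ?A"
    using one_hcomp[of H] by (auto simp: hcomp_iff fv.span_zero)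
next
  fix x y assume "x \<in> ?A" "y \<in> ?A"
  then show "mult H x y \<in> ?A"
    using deg_part_mult_span_lower_products[OF assoc] mult_carrier_H by blast
qed

lemma spanned_by_lower_products_if_generated_by_01:
  assumes assoc: "mult_assoc H" and gen: "generated_by_01 H"
  shows "spanned_by_lower_products H"
proof -
  let ?A = "{x \<in> carrier_H H. \<forall>n\<ge>2. deg_part n x \<in> fv.span (lower_products H n)}"
  have "hcomp H 0 \<union> hcomp H 1 \<subseteq> ?A"
  proof
    fix x assume x: "x \<in> hcomp H 0 \<union> hcomp H 1"
    have "deg_part n x = 0" if "2 \<le> n" for n
      using x that deg_part_hcomp_other[of x H 0 n] deg_part_hcomp_other[of x H 1 n] by auto
    then show "x \<in> ?A"
      using x by (auto simp: hcomp_iff fv.span_zero)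
  qed
  then have A: "?A = carrier_H H"
    using gen subalgebra_lower_spanned[OF assoc] unfolding generated_by_01_def by blast
  show ?thesis
    unfolding spanned_by_lower_products_def
  proof (intro allI impI subsetI)
    fix n x assume n: "2 \<le> n" and x: "x \<in> hcomp H n"
    then have "x \<in> ?A" using A by (simp add: hcomp_iff)
    then have "deg_part n x \<in> fv.span (lower_products H n)"
      using n by blast
    then show "x \<in> fv.span (lower_products H n)"
      by (simp only: deg_part_hcomp_self[OF x])
  qed
qed

lemma generated_by_01_iff_spanned_by_lower_products:
  "mult_assoc H \<Longrightarrow> generated_by_01 H \<longleftrightarrow> spanned_by_lower_products H"
  using spanned_by_lower_products_if_generated_by_01 generated_by_01_if_spanned_by_lower_products
  by blast

section \<open>The graded dual\<close>

lemma comul_gdual_eq_dot_mult: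
  assumes "i < hdim H p" "j < hdim H q"
  shows "comul (gdual H) x ((p,i),(q,j)) = dot (basis_idx H (p+q)) x (mult H (bvec (p,i)) (bvec (q,j)))"
proof -
  have "dot (basis_idx H (p+q)) x (mult H (bvec (p,i)) (bvec (q,j)))
      = (\<Sum>k<hdim H (p+q). x (p+q,k) * mult H (bvec (p,i)) (bvec (q,j)) (p+q,k))"
    unfolding dot_def basis_idx_def by (subst sum.reindex) (auto simp: inj_on_def)
  also have "\<dots> = (\<Sum>k<hdim H (p+q). x (p+q,k) * hmu H p i q j k)"
    using assms by (intro sum.cong refl) (simp add: mult_bvec)
  finally show ?thesis using assms by (simp add: comul_eval)
qed

lemma lower_products_subset_hcomp: "lower_products H n \<subseteq> hcomp H n"
  unfolding lower_products_def using mult_hcomp[OF bvec_hcomp bvec_hcomp] by blast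

lemma spanned_by_lower_products_if_inner_comul_injective_gdual:
  assumes inj: "inner_comul_injective (gdual H)"
  shows "spanned_by_lower_products H"
  unfolding spanned_by_lower_products_def
proof (intro allI impI subsetI)
  fix n x assume n: "2 \<le> n" and x: "x \<in> hcomp H n"
  show "x \<in> fv.span (lower_products H n)"
  proof (rule ccontr)
    assume "x \<notin> fv.span (lower_products H n)"
    then obtain c where c: "c \<in> hcomp H n" "\<forall>g\<in>lower_products H n. dot (basis_idx H n) c g = 0"
      "dot (basis_idx H n) c x \<noteq> 0"
      using exists_separating_dot_hcomp[OF lower_products_subset_hcomp x] by blast
    have "comul (gdual H) c ((p,i),(q,j)) = 0" if "0 < p" "0 < q" for p q i j
    proof (cases "p + q = n \<and> i < hdim H p \<and> j < hdim H q")
      case True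
      then have "mult H (bvec (p,i)) (bvec (q,j)) \<in> lower_products H n"
        using that unfolding lower_products_def by blast
      then show ?thesis using True c(2) by (simp add: comul_gdual_eq_dot_mult)
    next
      case False
      then show ?thesis
        using c(1) by (auto simp: comul_eval hcomp_iff)
    qed
    then have "c = (\<lambda>_. 0)"
      using inj n c(1) unfolding inner_comul_injective_def by simp
    then show False using c(3) by (simp add: dot_def)
  qed
qed

lemma inner_comul_injective_gdual_if_spanned_by_lower_products:
  assumes spanned: "spanned_by_lower_products H"
  shows "inner_comul_injective (gdual H)"
  unfolding inner_comul_injective_def hcomp_gdual
proof (intro allI impI ballI)
  fix n x assume n: "2 \<le> n" and x: "x \<in> hcomp H n"
    and vanish: "\<forall>p q i j. 0 < p \<longrightarrow> 0 < q \<longrightarrow> comul (gdual H) x ((p,i),(q,j)) = 0"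
  have "dot (basis_idx H n) x g = 0" if "g \<in> lower_products H n" for g
    using that vanish unfolding lower_products_def by (auto simp: comul_gdual_eq_dot_mult[symmetric])
  moreover have "bvec (n,k) \<in> fv.span (lower_products H n)" if "k < hdim H n" for k
    using spanned n bvec_hcomp[OF that] unfolding spanned_by_lower_products_def by blast
  ultimately have "dot (basis_idx H n) x (bvec (n,k)) = 0" if "k < hdim H n" for k
    using dot_eq_0_on_span that by blast
  then show "x = (\<lambda>_. 0)"
    by (intro hcomp_eq_0I[OF x]) (simp add: dot_bvec)
qed

lemma inner_comul_injective_gdual_iff:
  "inner_comul_injective (gdual H) \<longleftrightarrow> spanned_by_lower_products H"
  using spanned_by_lower_products_if_inner_comul_injective_gdual
    inner_comul_injective_gdual_if_spanned_by_lower_products by blast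

lemma spanned_by_lower_products_gdual_iff:
  "spanned_by_lower_products (gdual H) \<longleftrightarrow> inner_comul_injective H"
  using inner_comul_injective_gdual_iff[of "gdual H"] by (simp add: inner_comul_injective_def)

lemma mult_assoc_if_on_hbasis:
  assumes basis: "\<And>a b c. a \<in> hbasis H \<Longrightarrow> b \<in> hbasis H \<Longrightarrow> c \<in> hbasis H \<Longrightarrow>
    mult H (mult H a b) c = mult H a (mult H b c)"
  shows "mult_assoc H"
  unfolding mult_assoc_def
proof (intro ballI)
  fix u v w assume u: "u \<in> carrier_H H" and v: "v \<in> carrier_H H" and w: "w \<in> carrier_H H"
  have ab: "mult H (mult H a b) w = mult H a (mult H b w)" if "a \<in> hbasis H" "b \<in> hbasis H" for a b
    by (rule linear_maps_eq_on_span[OF carrier_H_span_hbasis[OF w]])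
       (simp_all add: basis that mult_add_right mult_scale_right mult_zero_fun_right)
  have a: "mult H (mult H a v) w = mult H a (mult H v w)" if "a \<in> hbasis H" for a
    by (rule linear_maps_eq_on_span[OF carrier_H_span_hbasis[OF v], where f = "\<lambda>v. mult H (mult H a v) w"])
       (simp_all add: ab that mult_add_right mult_scale_right mult_zero_fun_right mult_add_left
         mult_scale_left mult_zero_fun_left)
  show "mult H (mult H u v) w = mult H u (mult H v w)"
    by (rule linear_maps_eq_on_span[OF carrier_H_span_hbasis[OF u], where f = "\<lambda>u. mult H (mult H u v) w"])
       (simp_all add: a mult_add_left mult_scale_left mult_zero_fun_left)
qed

lemma coassoc_coeffs:
  assumes hopf: "graded_hopf H"
    and "i < hdim H p" "j < hdim H q" "l < hdim H r" "k < hdim H (p+q+r)"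
  shows "(\<Sum>m<hdim H (p+q). hde H p i q j m * hde H (p+q) m r l k) =
         (\<Sum>m<hdim H (q+r). hde H q j r l m * hde H p i (q+r) m k)"
proof -
  let ?x = "bvec (p+q+r,k)"
  have "comul_l H (comul H ?x) ((p,i),(q,j),(r,l)) = comul_r H (comul H ?x) ((p,i),(q,j),(r,l))"
    using graded_hopf_coassoc[OF hopf bvec_carrier_H[OF assms(5)]] by simp
  moreover have "comul_l H (comul H ?x) ((p,i),(q,j),(r,l)) =
      (\<Sum>m<hdim H (p+q). hde H p i q j m * hde H (p+q) m r l k)"
    unfolding comul_l_def using assms by (auto simp: comul_bvec mult.commute intro!: sum.cong)
  moreover have "comul_r H (comul H ?x) ((p,i),(q,j),(r,l)) =
      (\<Sum>m<hdim H (q+r). hde H q j r l m * hde H p i (q+r) m k)"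
    unfolding comul_r_def using assms by (auto simp: comul_bvec mult.commute add.assoc intro!: sum.cong)
  ultimately show ?thesis by simp
qed

lemma mult_gdual_assoc_on_hbasis:
  assumes hopf: "graded_hopf H" and a: "a \<in> hbasis H" and b: "b \<in> hbasis H" and c: "c \<in> hbasis H"
  shows "mult (gdual H) (mult (gdual H) a b) c = mult (gdual H) a (mult (gdual H) b c)"
proof -
  obtain p i where a': "a = bvec (p,i)" "i < hdim H p" using a unfolding hbasis_def by blast
  obtain q j where b': "b = bvec (q,j)" "j < hdim H q" using b unfolding hbasis_def by blast
  obtain r l where c': "c = bvec (r,l)" "l < hdim H r" using c unfolding hbasis_def by blast
  let ?L = "gdual H"
  show ?thesis
  proof
    fix z :: "nat \<times> nat"
    obtain n k where z: "z = (n,k)" by (cases z)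
    have lhs: "mult ?L (mult ?L a b) c (n,k) = (\<Sum>m<hdim H (p+q). hde H p i q j m *
       (if n = p+q+r \<and> k < hdim H n \<and> m < hdim H (p+q) then hde H (p+q) m r l k else 0))"
      unfolding a'(1) b'(1) c'(1) mult_bvec_expansion[of ?L] mult_sum_left mult_scale_left sum_apply
      using a' b' c' by (auto simp: sum_bvec intro!: sum.cong)
    have rhs: "mult ?L a (mult ?L b c) (n,k) = (\<Sum>m<hdim H (q+r). hde H q j r l m *
       (if n = p+q+r \<and> k < hdim H n \<and> m < hdim H (q+r) then hde H p i (q+r) m k else 0))"
      unfolding a'(1) b'(1) c'(1) mult_bvec_expansion[of ?L] mult_sum_right mult_scale_right sum_apply
      using a' b' c' by (auto simp: sum_bvec add.assoc intro!: sum.cong)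
    show "mult ?L (mult ?L a b) c z = mult ?L a (mult ?L b c) z"
    proof (cases "n = p+q+r \<and> k < hdim H n")
      case True
      then have "k < hdim H (p+q+r)" "n = p+q+r" by auto
      then show ?thesis
        unfolding z lhs rhs using coassoc_coeffs[OF hopf a'(2) b'(2) c'(2)] by simp
    next
      case False
      then have "\<And>P. (n = p + q + r \<and> k < hdim H n \<and> P) = False" by auto
      then show ?thesis unfolding z lhs rhs by (simp only: if_False mult_zero_right sum.neutral_const)
    qed
  qed
qed

lemma mult_assoc_gdual: "graded_hopf H \<Longrightarrow> mult_assoc (gdual H)"
  by (rule mult_assoc_if_on_hbasis) (simp add: hbasis_def mult_gdual_assoc_on_hbasis[unfolded hbasis_def])

section \<open>Semisimple subalgebras\<close>

definition two_sided_ideal :: "('k::field) hopf_data \<Rightarrow> 'k vec set \<Rightarrow> 'k vec set \<Rightarrow> bool" where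
  "two_sided_ideal H A I \<longleftrightarrow> left_ideal H A I \<and> (\<forall>a\<in>A. \<forall>x\<in>I. mult H x a \<in> I)"

definition maximal_ideal :: "('k::field) hopf_data \<Rightarrow> 'k vec set \<Rightarrow> 'k vec set \<Rightarrow> bool" where
  "maximal_ideal H A M \<longleftrightarrow> two_sided_ideal H A M \<and> M \<noteq> A \<and>
     (\<forall>J. two_sided_ideal H A J \<longrightarrow> M \<subseteq> J \<longrightarrow> J = M \<or> J = A)"

definition central_unit :: "('k::field) hopf_data \<Rightarrow> 'k vec set \<Rightarrow> 'k vec set \<Rightarrow> 'k vec \<Rightarrow> bool" where
  "central_unit H A I e \<longleftrightarrow> e \<in> I \<and> (\<forall>x\<in>I. mult H x e = x \<and> mult H e x = x) \<and>
     (\<forall>b\<in>A. mult H e b = mult H b e)"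

lemma two_sided_idealD:
  assumes "two_sided_ideal H A I"
  shows "I \<subseteq> A" "fv.subspace I" "\<And>a x. a \<in> A \<Longrightarrow> x \<in> I \<Longrightarrow> mult H a x \<in> I"
    "\<And>a x. a \<in> A \<Longrightarrow> x \<in> I \<Longrightarrow> mult H x a \<in> I"
  using assms unfolding two_sided_ideal_def left_ideal_def subspace_iff_fv_subspace by auto

locale hopf_subalgebra =
  fixes H :: "('k::field) hopf_data" and A :: "'k vec set"
  assumes hopf: "graded_hopf H" and subalgebra: "subalgebra H A"
begin

lemma subset_carrier: "A \<subseteq> carrier_H H"
  and subspace: "fv.subspace A"
  and one_mem: "one H \<in> A"
  and mult_mem: "x \<in> A \<Longrightarrow> y \<in> A \<Longrightarrow> mult H x y \<in> A"
  using subalgebra unfolding subalgebra_def subspace_iff_fv_subspace by auto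

lemma assoc: "u \<in> A \<Longrightarrow> v \<in> A \<Longrightarrow> w \<in> A \<Longrightarrow> mult H (mult H u v) w = mult H u (mult H v w)"
  using graded_hopf_mult_assoc[OF hopf] subset_carrier unfolding mult_assoc_def by blast

lemma mult_one_left: "x \<in> A \<Longrightarrow> mult H (one H) x = x"
  and mult_one_right: "x \<in> A \<Longrightarrow> mult H x (one H) = x"
  using graded_hopf_unit[OF hopf] subset_carrier by auto

lemma diff_mem: "x \<in> A \<Longrightarrow> y \<in> A \<Longrightarrow> (\<lambda>z. x z - y z) \<in> A"
  using subspace_diff_scale[OF subspace, of x y 1] by simp

lemma left_ideal_principal:
  assumes y: "y \<in> A"
  shows "left_ideal H A {mult H b y | b. b \<in> A}"
  unfolding left_ideal_def subspace_iff_fv_subspace fv.subspace_def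
proof (intro conjI ballI allI)
  show "{mult H b y | b. b \<in> A} \<subseteq> A" using mult_mem y by blast
  have "0 = mult H (\<lambda>_. 0) y" by (simp add: mult_zero_fun_left zero_fun_def)
  then show "0 \<in> {mult H b y | b. b \<in> A}" using fv.subspace_0[OF subspace] by (auto simp: zero_fun_def)
next
  fix u v assume "u \<in> {mult H b y | b. b \<in> A}" "v \<in> {mult H b y | b. b \<in> A}"
  then obtain bu bv where b: "u = mult H bu y" "v = mult H bv y" "bu \<in> A" "bv \<in> A" by blast
  then have "(\<lambda>z. bu z + bv z) \<in> A" using fv.subspace_add[OF subspace] by (simp add: plus_fun_def)
  moreover have "u + v = mult H (\<lambda>z. bu z + bv z) y" using b(1,2) by (simp add: mult_add_left plus_fun_def)
  ultimately show "u + v \<in> {mult H b y | b. b \<in> A}" by blast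
next
  fix c u assume "u \<in> {mult H b y | b. b \<in> A}"
  then obtain b where "u = mult H b y" "b \<in> A" by blast
  then show "(\<lambda>z. c * u z) \<in> {mult H b y | b. b \<in> A}"
    using fv.subspace_scale[OF subspace] by (auto simp: mult_scale_left[symmetric])
next
  fix a u assume a: "a \<in> A" and "u \<in> {mult H b y | b. b \<in> A}"
  then obtain b where "u = mult H b y" "b \<in> A" by blast
  then show "mult H a u \<in> {mult H b y | b. b \<in> A}"
    using assoc[OF a _ y] mult_mem[OF a] by (metis (mono_tags, lifting) mem_Collect_eq)
qed

lemma two_sided_ideal_principal_central:
  assumes c: "c \<in> A" and central: "\<And>b. b \<in> A \<Longrightarrow> mult H c b = mult H b c"
  shows "two_sided_ideal H A {mult H b c | b. b \<in> A}"
  unfolding two_sided_ideal_def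
proof (intro conjI ballI left_ideal_principal[OF c])
  fix a x assume a: "a \<in> A" and "x \<in> {mult H b c | b. b \<in> A}"
  then obtain b where b: "x = mult H b c" "b \<in> A" by blast
  have "mult H x a = mult H (mult H b a) c"
    unfolding b(1) using assoc b(2) c a central[OF a] by metis
  then show "mult H x a \<in> {mult H b c | b. b \<in> A}" using mult_mem[OF b(2) a] by blast
qed

lemma central_unit_combination:
  assumes M: "two_sided_ideal H A M" and J: "two_sided_ideal H A J" and MJ: "M \<subseteq> J"
    and e: "central_unit H A M e" and u: "central_unit H A J u"
  defines "c \<equiv> \<lambda>z. one H z - u z + e z"
  shows "c \<in> A" and "\<And>b. b \<in> A \<Longrightarrow> mult H c b = mult H b c"
    and "mult H c u = e" and "mult H c e = e" and "\<And>m. m \<in> M \<Longrightarrow> mult H m c = m"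
proof -
  have eM: "e \<in> M" and e0: "e \<in> A" and uJ: "u \<in> J" and u0: "u \<in> A"
    using e u two_sided_idealD(1)[OF M] two_sided_idealD(1)[OF J] unfolding central_unit_def by auto
  have ee: "mult H e e = e" using e eM unfolding central_unit_def by blast
  have eu: "mult H e u = e" using u eM MJ unfolding central_unit_def by blast
  have ue: "mult H u e = e" using u e0 eu unfolding central_unit_def by simp
  have uu: "mult H u u = u" using u uJ unfolding central_unit_def by blast
  show "c \<in> A"
    unfolding c_def using fv.subspace_add[OF subspace diff_mem[OF one_mem u0] e0] by (simp add: plus_fun_def)
  have mult_c: "mult H b c = (\<lambda>z. b z - mult H b u z + mult H b e z)" if "b \<in> A" for b
    unfolding c_def using mult_one_right[OF that] by (simp add: mult_add_right mult_diff_right)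
  have c_mult: "mult H c b = (\<lambda>z. b z - mult H u b z + mult H e b z)" if "b \<in> A" for b
    unfolding c_def using mult_one_left[OF that] by (simp add: mult_add_left mult_diff_left)
  show "mult H c b = mult H b c" if "b \<in> A" for b
    using e u that unfolding central_unit_def by (simp add: mult_c c_mult)
  show "mult H c u = e" and "mult H c e = e"
    using u0 e0 by (simp_all add: c_mult ee eu ue uu)
  show "mult H m c = m" if m: "m \<in> M" for m
  proof -
    have "mult H m u = m" "mult H m e = m"
      using u e m MJ unfolding central_unit_def by blast+
    then show ?thesis using m two_sided_idealD(1)[OF M] by (auto simp: mult_c)
  qed
qed

text \<open>\<open>K\<close> is the ideal generated by the central element \<open>1 - u + e\<close>, where \<open>e\<close> and \<open>u\<close> are the
  central units of \<open>M\<close> and \<open>J\<close>.\<close>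

lemma exists_relative_complement_ideal:
  assumes M: "two_sided_ideal H A M" and J: "two_sided_ideal H A J" and MJ: "M \<subseteq> J"
    and e: "central_unit H A M e" and u: "central_unit H A J u"
  obtains K where "two_sided_ideal H A K" "M \<subseteq> K" "J \<inter> K \<subseteq> M" "K = M \<Longrightarrow> J = A"
proof -
  define c where "c = (\<lambda>z. one H z - u z + e z)"
  note c = central_unit_combination[OF M J MJ e u, folded c_def]
  have eM: "e \<in> M" and uJ: "u \<in> J" and u0: "u \<in> A" and e0: "e \<in> A"
    using e u two_sided_idealD(1)[OF M] two_sided_idealD(1)[OF J] unfolding central_unit_def by auto
  let ?K = "{mult H b c | b. b \<in> A}"
  show ?thesis
  proof
    show "two_sided_ideal H A ?K" by (rule two_sided_ideal_principal_central[OF c(1,2)])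
  next
    show "M \<subseteq> ?K" using c(5) two_sided_idealD(1)[OF M] by force
  next
    show "J \<inter> ?K \<subseteq> M"
    proof
      fix x assume "x \<in> J \<inter> ?K"
      then obtain b where x: "x \<in> J" "x = mult H b c" "b \<in> A" by blast
      have "x = mult H x u" using u x(1) unfolding central_unit_def by simp
      also have "\<dots> = mult H x e" unfolding x(2) using assoc[OF x(3) c(1)] u0 e0 by (simp add: c(3,4))
      finally have "x = mult H x e" .
      moreover have "mult H x e \<in> M"
        using two_sided_idealD(3)[OF M _ eM] x(1) two_sided_idealD(1)[OF J] by blast
      ultimately show "x \<in> M" by simp
    qed
  next
    assume "?K = M"
    moreover have "c \<in> ?K"
      using mult_one_left[OF c(1)] one_mem by (intro CollectI exI[of _ "one H"]) simp
    ultimately have "mult H c e = c" using e unfolding central_unit_def by blast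
    then have "c = e" using c(4) by simp
    have "u = one H"
    proof
      fix z show "u z = one H z"
        using fun_cong[OF \<open>c = e\<close>, of z] unfolding c_def by (simp add: algebra_simps)
    qed
    then have "x \<in> J" if "x \<in> A" for x
      using two_sided_idealD(3)[OF J that uJ] mult_one_right[OF that] by simp
    then show "J = A" using two_sided_idealD(1)[OF J] by blast
  qed
qed

end

locale semisimple_hopf_subalgebra = hopf_subalgebra +
  assumes semisimple: "semisimple_alg H A"
begin

lemma nilpotent_left_ideal_eq_0:
  assumes N: "left_ideal H A N" and nil: "\<And>x y. x \<in> N \<Longrightarrow> y \<in> N \<Longrightarrow> mult H x y = (\<lambda>_. 0)"
    and x: "x \<in> N"
  shows "x = (\<lambda>_. 0)"
proof -
  obtain K where K: "left_ideal H A K" "ssum N K = A" "N \<inter> K = {\<lambda>_. 0}"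
    using semisimple N unfolding semisimple_alg_def by blast
  obtain n k where nk: "n \<in> N" "k \<in> K" "one H = (\<lambda>z. n z + k z)"
    using one_mem K(2) unfolding ssum_def by blast
  have x0: "x \<in> A" using x N unfolding left_ideal_def by auto
  have "x = mult H x (one H)" using mult_one_right[OF x0] by simp
  also have "\<dots> = mult H x k" unfolding nk(3) mult_add_right nil[OF x nk(1)] by simp
  finally have "x \<in> K" using K(1) x0 nk(2) unfolding left_ideal_def by metis
  then show ?thesis using K(3) x by auto
qed

lemma ideal_mult_complement_eq_0:
  assumes I: "two_sided_ideal H A I" and K: "left_ideal H A K" "I \<inter> K = {\<lambda>_. 0}"
    and x: "x \<in> I" and k: "k \<in> K"
  shows "mult H x k = (\<lambda>_. 0)"
proof -
  have "k \<in> A" "x \<in> A" using K(1) k x two_sided_idealD(1)[OF I] unfolding left_ideal_def by auto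
  then have "mult H x k \<in> I \<inter> K"
    using two_sided_idealD(4)[OF I] K(1) x k unfolding left_ideal_def by blast
  then show ?thesis using K(2) by blast
qed

text \<open>The part \<open>f\<close> of \<open>1 = e + f\<close> in the complement of \<open>I\<close> kills \<open>I\<close>: otherwise
  \<open>A (f x)\<close> would be a nonzero nilpotent left ideal.\<close>

lemma complement_part_annihilates_ideal:
  assumes I: "two_sided_ideal H A I" and K: "left_ideal H A K" "I \<inter> K = {\<lambda>_. 0}"
    and f: "f \<in> K" and x: "x \<in> I"
  shows "mult H f x = (\<lambda>_. 0)"
proof -
  have f0: "f \<in> A" using f K(1) unfolding left_ideal_def by auto
  have x0: "x \<in> A" using x two_sided_idealD(1)[OF I] by auto
  define y where "y = mult H f x"
  have yI: "y \<in> I" unfolding y_def using two_sided_idealD(3)[OF I f0 x] .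
  have y0: "y \<in> A" using yI two_sided_idealD(1)[OF I] by auto
  have "mult H u v = (\<lambda>_. 0)"
    if u: "u \<in> {mult H b y | b. b \<in> A}" and v: "v \<in> {mult H b y | b. b \<in> A}" for u v
  proof -
    obtain bu bv where b: "u = mult H bu y" "v = mult H bv y" "bu \<in> A" "bv \<in> A"
      using u v by blast
    have ybv: "mult H y bv \<in> I" using two_sided_idealD(4)[OF I b(4) yI] .
    then have ybv0: "mult H y bv \<in> A" using two_sided_idealD(1)[OF I] by auto
    have "mult H u v = mult H bu (mult H y (mult H bv y))"
      unfolding b(1,2) using assoc[OF b(3) y0 mult_mem[OF b(4) y0]] .
    also have "mult H y (mult H bv y) = mult H (mult H y bv) y" using assoc[OF y0 b(4) y0] by simp
    also have "\<dots> = mult H (mult H (mult H y bv) f) x" using assoc[OF ybv0 f0 x0] by (simp add: y_def)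
    also have "mult H (mult H y bv) f = (\<lambda>_. 0)"
      using ybv by (rule ideal_mult_complement_eq_0[OF I K _ f])
    finally show ?thesis by (simp add: mult_zero_fun_left mult_zero_fun_right)
  qed
  moreover have "y \<in> {mult H b y | b. b \<in> A}"
    using mult_one_left[OF y0] one_mem by (metis (mono_tags, lifting) mem_Collect_eq)
  ultimately show ?thesis
    unfolding y_def[symmetric] using nilpotent_left_ideal_eq_0[OF left_ideal_principal[OF y0]] by blast
qed

lemma central_unit_exists:
  assumes I: "two_sided_ideal H A I"
  shows "\<exists>e. central_unit H A I e"
proof -
  obtain K where K: "left_ideal H A K" "ssum I K = A" "I \<inter> K = {\<lambda>_. 0}"
    using semisimple I unfolding semisimple_alg_def two_sided_ideal_def by blast
  obtain e f where ef: "e \<in> I" "f \<in> K" "one H = (\<lambda>z. e z + f z)"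
    using one_mem K(2) unfolding ssum_def by blast
  have e0: "e \<in> A" using ef(1) two_sided_idealD(1)[OF I] by auto
  have right_unit: "mult H x e = x" if x: "x \<in> I" for x
  proof -
    have "x = mult H x (one H)" using mult_one_right x two_sided_idealD(1)[OF I] by auto
    also have "\<dots> = mult H x e"
      unfolding ef(3) mult_add_right ideal_mult_complement_eq_0[OF I K(1,3) x ef(2)] by simp
    finally show ?thesis by simp
  qed
  have left_unit: "mult H e x = x" if x: "x \<in> I" for x
  proof -
    have "x = mult H (one H) x" using mult_one_left x two_sided_idealD(1)[OF I] by auto
    also have "\<dots> = mult H e x"
      unfolding ef(3) mult_add_left complement_part_annihilates_ideal[OF I K(1,3) ef(2) x] by simp
    finally show ?thesis by simp
  qed
  have "mult H e b = mult H b e" if b: "b \<in> A" for b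
  proof -
    have "mult H b e = mult H e (mult H b e)" using left_unit two_sided_idealD(3)[OF I b ef(1)] by simp
    also have "\<dots> = mult H (mult H e b) e" using assoc[OF e0 b e0] by simp
    also have "\<dots> = mult H e b" using right_unit two_sided_idealD(4)[OF I b ef(1)] by simp
    finally show ?thesis by simp
  qed
  then show ?thesis using ef(1) left_unit right_unit unfolding central_unit_def by blast
qed

lemma maximal_ideal_if_dim_maximal_avoiding:
  assumes B: "finite B" "A \<subseteq> fv.span B"
    and M: "two_sided_ideal H A M" and a: "a \<in> A" "a \<notin> M"
    and dim_max: "\<And>J. two_sided_ideal H A J \<Longrightarrow> a \<notin> J \<Longrightarrow> fv.dim J \<le> fv.dim M"
  shows "maximal_ideal H A M"
  unfolding maximal_ideal_def
proof (intro conjI allI impI M)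
  show "M \<noteq> A" using a by blast
next
  fix J assume J: "two_sided_ideal H A J" and MJ: "M \<subseteq> J"
  have eq_M: "I = M" if I: "two_sided_ideal H A I" "M \<subseteq> I" "a \<notin> I" for I
  proof (rule ccontr)
    assume "I \<noteq> M"
    then have "M \<subset> I" using I(2) by blast
    moreover have "I \<subseteq> fv.span B" using two_sided_idealD(1)[OF I(1)] B(2) by blast
    ultimately have "fv.dim M < fv.dim I"
      using dim_less_if_psubset[OF two_sided_idealD(2)[OF M] _ B(1)] by blast
    then show False using dim_max[OF I(1,3)] by simp
  qed
  show "J = M \<or> J = A"
  proof (cases "a \<in> J")
    case False
    then show ?thesis using eq_M J MJ by blast
  next
    case True
    obtain e where "central_unit H A M e" using central_unit_exists[OF M] ..
    moreover obtain u where "central_unit H A J u" using central_unit_exists[OF J] ..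
    ultimately obtain K where K: "two_sided_ideal H A K" "M \<subseteq> K" "J \<inter> K \<subseteq> M" "K = M \<Longrightarrow> J = A"
      using exists_relative_complement_ideal[OF M J MJ] by blast
    have "a \<notin> K" using K(3) True a(2) by blast
    then show ?thesis using eq_M[OF K(1,2)] K(4) by blast
  qed
qed

lemma exists_maximal_ideal_avoiding:
  assumes B: "finite B" "A \<subseteq> fv.span B" and a: "a \<in> A" "a \<noteq> (\<lambda>_. 0)"
  shows "\<exists>M. maximal_ideal H A M \<and> a \<notin> M"
proof -
  define Q where "Q n \<longleftrightarrow> (\<exists>I. two_sided_ideal H A I \<and> a \<notin> I \<and> fv.dim I = n)" for n
  have "(\<lambda>_. 0) \<in> A" using fv.subspace_0[OF subspace] by (simp add: zero_fun_def)
  then have "two_sided_ideal H A {\<lambda>_. 0}"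
    unfolding two_sided_ideal_def left_ideal_def subspace_def
    by (simp add: mult_zero_fun_left mult_zero_fun_right)
  moreover have "a \<notin> {\<lambda>_. 0}" using a(2) by simp
  ultimately obtain I0 where "two_sided_ideal H A I0" "a \<notin> I0" by blast
  then have "Q (fv.dim I0)" unfolding Q_def by blast
  moreover have "n \<le> card B" if "Q n" for n
  proof -
    obtain I where I: "two_sided_ideal H A I" "fv.dim I = n" using \<open>Q n\<close> unfolding Q_def by blast
    then have "I \<subseteq> fv.span B" using two_sided_idealD(1)[OF I(1)] B(2) by blast
    then show ?thesis using fv.dim_le_card[OF _ B(1)] I(2) by blast
  qed
  ultimately obtain n where n: "Q n" "\<And>m. Q m \<Longrightarrow> m \<le> n"
    using Nat.ex_has_greatest_nat[of Q _ "card B"] by blast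
  then obtain M where M: "two_sided_ideal H A M" "a \<notin> M" "fv.dim M = n" unfolding Q_def by blast
  have "fv.dim J \<le> fv.dim M" if "two_sided_ideal H A J" "a \<notin> J" for J
    using n(2)[of "fv.dim J"] that M(3) unfolding Q_def by blast
  then have "maximal_ideal H A M"
    by (rule maximal_ideal_if_dim_maximal_avoiding[OF B M(1) a(1) M(2)])
  then show ?thesis using M(2) by blast
qed

end

section \<open>The coradical of the graded dual\<close>

lemma comul_col_hcomp0: "x \<in> hcomp H 0 \<Longrightarrow> (\<lambda>a. comul H x (a,b)) \<in> hcomp H 0"
  unfolding hcomp_iff[of "\<lambda>a. comul H x (a,b)"]
  using comul_col_carrier_H[of x H b] comul_hcomp0[of x H] by (cases b) (auto simp: hcomp_iff)

lemma comul_row_hcomp0: "x \<in> hcomp H 0 \<Longrightarrow> (\<lambda>b. comul H x (a,b)) \<in> hcomp H 0"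
  unfolding hcomp_iff[of "\<lambda>b. comul H x (a,b)"]
  using comul_row_carrier_H[of x H a] comul_hcomp0[of x H] by (cases a) (auto simp: hcomp_iff)

lemma subcoalg_inter_hcomp0:
  assumes C: "subcoalg H C"
  shows "subcoalg H (C \<inter> hcomp H 0)"
proof -
  have Cs: "fv.subspace C" and Ccom: "\<And>x. x \<in> C \<Longrightarrow> comul H x \<in> tens_span C C"
    using C unfolding subcoalg_def subspace_iff_fv_subspace by auto
  have C's: "fv.subspace (C \<inter> hcomp H 0)" by (rule fv.subspace_inter[OF Cs subspace_hcomp])
  show ?thesis
    unfolding subcoalg_def subspace_iff_fv_subspace
  proof (intro conjI ballI C's)
    show "C \<inter> hcomp H 0 \<subseteq> carrier_H H" by (auto simp: hcomp_iff)
  next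
    fix x assume x: "x \<in> C \<inter> hcomp H 0"
    have T: "comul H x \<in> fv.span {tensor x y | x y. x \<in> C \<and> y \<in> C}"
      using Ccom x unfolding tens_span_eq_span by blast
    show "comul H x \<in> tens_span (C \<inter> hcomp H 0) (C \<inter> hcomp H 0)"
      unfolding tens_span_eq_span
    proof (rule tensor_spanI[OF C's C's])
      show "finite {z. comul H x z \<noteq> 0}"
        using finite_comul_support x by (auto simp: hcomp_iff)
    next
      fix b show "(\<lambda>a. comul H x (a,b)) \<in> C \<inter> hcomp H 0"
        using tensor_span_col[OF T Cs] comul_col_hcomp0 x by blast
    next
      fix a show "(\<lambda>b. comul H x (a,b)) \<in> C \<inter> hcomp H 0"
        using tensor_span_row[OF T Cs] comul_row_hcomp0 x by blast
    qed
  qed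
qed

text \<open>The column of \<open>\<Delta> x\<close> at a top-degree coordinate \<open>(N,j)\<close> of \<open>x\<close> lies in degree zero,
  and the counit maps it to the nonzero coefficient \<open>x (N,j)\<close>.\<close>

lemma subcoalg_meets_hcomp0:
  assumes counit: "\<And>v. v \<in> carrier_H H \<Longrightarrow> eps_l H (comul H v) = v"
    and C: "subcoalg H C" and x: "x \<in> C" "x \<noteq> (\<lambda>_. 0)"
  shows "\<exists>y \<in> C \<inter> hcomp H 0. y \<noteq> (\<lambda>_. 0)"
proof -
  have Cs: "fv.subspace C" and xc: "x \<in> carrier_H H"
    and T: "comul H x \<in> fv.span {tensor x y | x y. x \<in> C \<and> y \<in> C}"
    using C x unfolding subcoalg_def subspace_iff_fv_subspace tens_span_eq_span by auto
  define D where "D = {n. \<exists>k. x (n,k) \<noteq> 0}"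
  obtain M where "\<forall>n k. M < n \<longrightarrow> x (n,k) = 0" using carrier_H_bounded_degree[OF xc] by blast
  then have "D \<subseteq> {..M}" unfolding D_def by (auto simp: not_le[symmetric])
  then have "finite D" by (rule finite_subset) simp
  moreover have "D \<noteq> {}" using x(2) unfolding D_def by (auto simp: fun_eq_iff)
  ultimately have N: "Max D \<in> D" "\<And>n. n \<in> D \<Longrightarrow> n \<le> Max D" by simp_all
  define N where "N = Max D"
  obtain j where xj: "x (N,j) \<noteq> 0" using N(1) unfolding N_def D_def by auto
  have above: "x (n,k) = 0" if "N < n" for n k
    using N(2)[of n] that unfolding N_def D_def by force
  define y where "y = (\<lambda>a. comul H x (a,(N,j)))"
  have "y \<in> C" unfolding y_def by (rule tensor_span_col[OF T Cs])
  moreover have "y \<in> hcomp H 0" unfolding hcomp_iff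
  proof (intro conjI allI impI)
    show "y \<in> carrier_H H" unfolding y_def by (rule comul_col_carrier_H[OF xc])
    fix m i :: nat assume "m \<noteq> 0"
    then show "y (m,i) = 0" unfolding y_def using above by (intro comul_eq_0_if_deg_vanishes) auto
  qed
  moreover have "y \<noteq> (\<lambda>_. 0)"
  proof
    assume "y = (\<lambda>_. 0)"
    then have "\<forall>a. comul H x (a,(N,j)) = 0" unfolding y_def by (simp add: fun_eq_iff)
    then have "eps_l H (comul H x) (N,j) = 0" by (simp add: eps_l_def)
    then show False using counit[OF xc] xj by simp
  qed
  ultimately show ?thesis by blast
qed

lemma simple_subcoalg_subset_hcomp0:
  assumes counit: "\<And>v. v \<in> carrier_H H \<Longrightarrow> eps_l H (comul H v) = v"
    and C: "simple_subcoalg H C"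
  shows "C \<subseteq> hcomp H 0"
proof -
  have Cc: "subcoalg H C" and "C \<noteq> {\<lambda>_. 0}"
    and Cmin: "\<And>D. subcoalg H D \<Longrightarrow> D \<subseteq> C \<Longrightarrow> D = {\<lambda>_. 0} \<or> D = C"
    using C unfolding simple_subcoalg_def by auto
  moreover have "fv.subspace C" using Cc unfolding subcoalg_def subspace_iff_fv_subspace by blast
  then have "(\<lambda>_. 0) \<in> C" using fv.subspace_0 by (simp add: zero_fun_def)
  ultimately obtain x where "x \<in> C" "x \<noteq> (\<lambda>_. 0)" by blast
  then obtain y where "y \<in> C \<inter> hcomp H 0" "y \<noteq> (\<lambda>_. 0)"
    using subcoalg_meets_hcomp0[OF counit Cc] by blast
  then have "C \<inter> hcomp H 0 = C"
    using Cmin[OF subcoalg_inter_hcomp0[OF Cc]] by blast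
  then show ?thesis by blast
qed

lemma unit_coeffs:
  assumes hopf: "graded_hopf H" and "j < hdim H q" "k < hdim H q"
  shows "(\<Sum>i<hdim H 0. hun H i * hmu H 0 i q j k) = (if j = k then 1 else 0)"
proof -
  have "mult H (one H) (bvec (q,j)) (q,k) = bvec (q,j) (q,k)"
    using graded_hopf_unit[OF hopf bvec_carrier_H[OF assms(2)]] by simp
  moreover have "mult H (one H) (bvec (q,j)) (q,k) = (\<Sum>i<hdim H 0. hun H i * hmu H 0 i q j k)"
    unfolding one_expansion mult_sum_left mult_scale_left sum_apply mult_bvec using assms(2,3)
    by (intro sum.cong) auto
  ultimately show ?thesis by (auto simp: bvec_def)
qed

lemma counit_gdual:
  assumes hopf: "graded_hopf H" and v: "v \<in> carrier_H H"
  shows "eps_l (gdual H) (comul (gdual H) v) = v"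
proof
  fix z :: "nat \<times> nat"
  obtain q j where z: "z = (q,j)" by (cases z)
  show "eps_l (gdual H) (comul (gdual H) v) z = v z"
  proof (cases "j < hdim H q")
    case True
    have "eps_l (gdual H) (comul (gdual H) v) (q,j)
        = (\<Sum>i<hdim H 0. \<Sum>k<hdim H q. v (q,k) * (hun H i * hmu H 0 i q j k))"
      unfolding eps_l_def comul_eval using True
      by (simp add: sum_distrib_left sum_distrib_right mult_ac)
    also have "\<dots> = (\<Sum>k<hdim H q. v (q,k) * (\<Sum>i<hdim H 0. hun H i * hmu H 0 i q j k))"
      by (subst sum.swap) (simp add: sum_distrib_left)
    also have "\<dots> = (\<Sum>k<hdim H q. if k = j then v (q,k) else 0)"
      by (rule sum.cong[OF refl]) (auto simp: unit_coeffs[OF hopf True])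
    also have "\<dots> = v (q,j)" using True by (simp add: sum.delta')
    finally show ?thesis unfolding z .
  next
    case False
    then show ?thesis
      unfolding z eps_l_def comul_eval using carrier_H_outside[OF v, of q j] by simp
  qed
qed

lemma coradical_gdual_subset_hcomp0:
  assumes hopf: "graded_hopf H"
  shows "coradical (gdual H) \<subseteq> hcomp H 0"
proof -
  have "C \<subseteq> hcomp H 0" if "simple_subcoalg (gdual H) C" for C
    using simple_subcoalg_subset_hcomp0[OF _ that] counit_gdual[OF hopf] by simp
  then show ?thesis
    unfolding coradical_def lin_span_eq_span by (intro fv.span_minimal[OF _ subspace_hcomp]) blast
qed

definition annihilator :: "('k::field) hopf_data \<Rightarrow> 'k vec set \<Rightarrow> 'k vec set" where
  "annihilator H S = {v \<in> hcomp H 0. \<forall>w\<in>S. dot (basis_idx H 0) v w = 0}"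

lemma dot_basis_idx: "dot (basis_idx H n) g w = (\<Sum>l<hdim H n. g (n,l) * w (n,l))"
  unfolding dot_def basis_idx_def by (subst sum.reindex) (auto simp: inj_on_def)

lemma subspace_annihilator: "fv.subspace (annihilator H S)"
  unfolding fv.subspace_def annihilator_def using subspace_hcomp[of H 0] unfolding fv.subspace_def
  by (auto simp: dot_def algebra_simps sum.distrib sum_distrib_left[symmetric])

lemma annihilator_annihilator_subset:
  assumes E: "fv.subspace E" "E \<subseteq> hcomp H 0"
  shows "annihilator H (annihilator H E) \<subseteq> E"
proof
  fix g assume g: "g \<in> annihilator H (annihilator H E)"
  show "g \<in> E"
  proof (rule ccontr)
    assume "g \<notin> E"
    then have "g \<notin> fv.span E" unfolding fv.span_eq_iff[THEN iffD2, OF E(1)] .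
    moreover have "g \<in> hcomp H 0" using g unfolding annihilator_def by auto
    ultimately obtain c where c: "c \<in> hcomp H 0" "\<forall>e\<in>E. dot (basis_idx H 0) c e = 0"
        "dot (basis_idx H 0) c g \<noteq> 0"
      using exists_separating_dot_hcomp[OF E(2)] by blast
    then have "c \<in> annihilator H E" unfolding annihilator_def by auto
    then show False using g c(3) unfolding annihilator_def by (auto simp: dot_commute)
  qed
qed

lemma annihilator_eq_hcomp0_imp_zero:
  assumes "annihilator H E = hcomp H 0" "E \<subseteq> hcomp H 0" "g \<in> E"
  shows "g = (\<lambda>_. 0)"
proof (rule hcomp_eq_0I)
  show "g \<in> hcomp H 0" using assms by blast
  fix i assume i: "i < hdim H 0"
  then have "dot (basis_idx H 0) (bvec (0,i)) g = 0"
    using assms bvec_hcomp[OF i] unfolding annihilator_def by blast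
  then show "g (0,i) = 0" using i by (simp add: dot_commute dot_bvec)
qed

lemma dot_mult_hcomp0:
  "dot (basis_idx H 0) g (mult H b a) =
     (\<Sum>i<hdim H 0. \<Sum>j<hdim H 0. comul (gdual H) g ((0,i),(0,j)) * b (0,i) * a (0,j))"
proof -
  let ?N = "hdim H 0"
  have "dot (basis_idx H 0) g (mult H b a)
      = (\<Sum>l<?N. \<Sum>i<?N. \<Sum>j<?N. g (0,l) * (b (0,i) * a (0,j) * hmu H 0 i 0 j l))"
    unfolding dot_basis_idx by (simp add: mult_eval sum_distrib_left)
  also have "\<dots> = (\<Sum>i<?N. \<Sum>j<?N. \<Sum>l<?N. g (0,l) * (b (0,i) * a (0,j) * hmu H 0 i 0 j l))"
    by (subst sum.swap) (rule sum.cong[OF refl], rule sum.swap)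
  also have "\<dots> = (\<Sum>i<?N. \<Sum>j<?N. (\<Sum>l<?N. g (0,l) * hmu H 0 i 0 j l) * b (0,i) * a (0,j))"
    by (simp add: sum_distrib_left sum_distrib_right mult_ac)
  also have "\<dots> = (\<Sum>i<?N. \<Sum>j<?N. comul (gdual H) g ((0,i),(0,j)) * b (0,i) * a (0,j))"
    by (intro sum.cong refl) (simp add: comul_eval)
  finally show ?thesis .
qed

lemma dot_mult_hcomp0_left:
  "dot (basis_idx H 0) g (mult H b a) =
     (\<Sum>i<hdim H 0. b (0,i) * dot (basis_idx H 0) (\<lambda>z. comul (gdual H) g ((0,i),z)) a)"
proof -
  have "dot (basis_idx H 0) g (mult H b a) =
      (\<Sum>i<hdim H 0. \<Sum>j<hdim H 0. comul (gdual H) g ((0,i),(0,j)) * b (0,i) * a (0,j))"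
    by (rule dot_mult_hcomp0)
  also have "\<dots> = (\<Sum>i<hdim H 0. b (0,i) * dot (basis_idx H 0) (\<lambda>z. comul (gdual H) g ((0,i),z)) a)"
    unfolding dot_basis_idx by (simp add: sum_distrib_left mult_ac)
  finally show ?thesis .
qed

lemma dot_mult_hcomp0_right:
  "dot (basis_idx H 0) g (mult H b a) =
     (\<Sum>j<hdim H 0. a (0,j) * dot (basis_idx H 0) (\<lambda>z. comul (gdual H) g (z,(0,j))) b)"
proof -
  have "dot (basis_idx H 0) g (mult H b a) =
      (\<Sum>j<hdim H 0. \<Sum>i<hdim H 0. comul (gdual H) g ((0,i),(0,j)) * b (0,i) * a (0,j))"
    unfolding dot_mult_hcomp0 by (rule sum.swap)
  also have "\<dots> = (\<Sum>j<hdim H 0. a (0,j) * dot (basis_idx H 0) (\<lambda>z. comul (gdual H) g (z,(0,j))) b)"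
    unfolding dot_basis_idx by (simp add: sum_distrib_left mult_ac)
  finally show ?thesis .
qed

lemma two_sided_ideal_annihilator:
  assumes E: "subcoalg (gdual H) E" "E \<subseteq> hcomp H 0"
  shows "two_sided_ideal H (hcomp H 0) (annihilator H E)"
  unfolding two_sided_ideal_def left_ideal_def subspace_iff_fv_subspace
proof (intro conjI ballI subspace_annihilator)
  show "annihilator H E \<subseteq> hcomp H 0" unfolding annihilator_def by auto
  have Es: "fv.subspace E"
    and T: "\<And>g. g \<in> E \<Longrightarrow> comul (gdual H) g \<in> fv.span {tensor x y | x y. x \<in> E \<and> y \<in> E}"
    using E unfolding subcoalg_def subspace_iff_fv_subspace tens_span_eq_span by auto
  fix b x assume b: "b \<in> hcomp H 0" and x: "x \<in> annihilator H E"
  then have x0: "x \<in> hcomp H 0" and xE: "\<And>g. g \<in> E \<Longrightarrow> dot (basis_idx H 0) g x = 0"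
    unfolding annihilator_def by (auto simp: dot_commute)
  have "dot (basis_idx H 0) (mult H b x) g = 0" if "g \<in> E" for g
    using xE[OF tensor_span_row[OF T[OF that] Es]]
    by (simp add: dot_commute[of _ "mult H b x"] dot_mult_hcomp0_left)
  then show "mult H b x \<in> annihilator H E"
    using mult_hcomp[OF b x0] unfolding annihilator_def by simp
  have "dot (basis_idx H 0) (mult H x b) g = 0" if "g \<in> E" for g
    using xE[OF tensor_span_col[OF T[OF that] Es]]
    by (simp add: dot_commute[of _ "mult H x b"] dot_mult_hcomp0_right)
  then show "mult H x b \<in> annihilator H E"
    using mult_hcomp[OF x0 b] unfolding annihilator_def by simp
qed

lemma comul_gdual_col_annihilator:
  assumes M: "two_sided_ideal H (hcomp H 0) M" and g: "g \<in> annihilator H M"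
  shows "(\<lambda>a. comul (gdual H) g (a,b)) \<in> annihilator H M"
proof -
  have g0: "g \<in> hcomp H 0" and gM: "\<And>m. m \<in> M \<Longrightarrow> dot (basis_idx H 0) g m = 0"
    using g unfolding annihilator_def by auto
  obtain q j where b: "b = (q,j)" by (cases b)
  have "dot (basis_idx H 0) (\<lambda>a. comul (gdual H) g (a,b)) m = 0" if m: "m \<in> M" for m
  proof (cases "q = 0 \<and> j < hdim H 0")
    case True
    then have "mult H m (bvec (0,j)) \<in> M"
      using two_sided_idealD(4)[OF M bvec_hcomp m] by simp
    then have "dot (basis_idx H 0) g (mult H m (bvec (0,j))) = 0" by (rule gM)
    then show ?thesis
      unfolding dot_mult_hcomp0_right sum_bvec' using True b by simp
  next
    case False
    have "comul (gdual H) g ((p,i),(q,j)) = 0" for p i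
      using False comul_hcomp0[OF g0, of p q "gdual H" i j] by (cases "q = 0") (auto simp: comul_eval)
    then have "(\<lambda>a. comul (gdual H) g (a,b)) = (\<lambda>_. 0)"
      unfolding b by (auto simp: fun_eq_iff)
    then show ?thesis by (simp add: dot_def)
  qed
  moreover have "(\<lambda>a. comul (gdual H) g (a,b)) \<in> hcomp H 0"
    using comul_col_hcomp0[of g "gdual H"] g0 by simp
  ultimately show ?thesis unfolding annihilator_def by blast
qed

lemma comul_gdual_row_annihilator:
  assumes M: "two_sided_ideal H (hcomp H 0) M" and g: "g \<in> annihilator H M"
  shows "(\<lambda>b. comul (gdual H) g (a,b)) \<in> annihilator H M"
proof -
  have g0: "g \<in> hcomp H 0" and gM: "\<And>m. m \<in> M \<Longrightarrow> dot (basis_idx H 0) g m = 0"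
    using g unfolding annihilator_def by auto
  obtain p i where a: "a = (p,i)" by (cases a)
  have "dot (basis_idx H 0) (\<lambda>b. comul (gdual H) g (a,b)) m = 0" if m: "m \<in> M" for m
  proof (cases "p = 0 \<and> i < hdim H 0")
    case True
    then have "mult H (bvec (0,i)) m \<in> M"
      using two_sided_idealD(3)[OF M bvec_hcomp m] by simp
    then have "dot (basis_idx H 0) g (mult H (bvec (0,i)) m) = 0" by (rule gM)
    then show ?thesis
      unfolding dot_mult_hcomp0_left sum_bvec' using True a by simp
  next
    case False
    have "comul (gdual H) g ((p,i),(q,j)) = 0" for q j
      using False comul_hcomp0[OF g0, of p q "gdual H" i j] by (cases "p = 0") (auto simp: comul_eval)
    then have "(\<lambda>b. comul (gdual H) g (a,b)) = (\<lambda>_. 0)"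
      unfolding a by (auto simp: fun_eq_iff)
    then show ?thesis by (simp add: dot_def)
  qed
  moreover have "(\<lambda>b. comul (gdual H) g (a,b)) \<in> hcomp H 0"
    using comul_row_hcomp0[of g "gdual H"] g0 by simp
  ultimately show ?thesis unfolding annihilator_def by blast
qed

lemma subcoalg_annihilator:
  assumes M: "two_sided_ideal H (hcomp H 0) M"
  shows "subcoalg (gdual H) (annihilator H M)"
  unfolding subcoalg_def subspace_iff_fv_subspace
proof (intro conjI ballI subspace_annihilator)
  show "annihilator H M \<subseteq> carrier_H (gdual H)" unfolding annihilator_def by (auto simp: hcomp_iff)
next
  fix g assume g: "g \<in> annihilator H M"
  then have "g \<in> carrier_H H" unfolding annihilator_def by (auto simp: hcomp_iff)
  then show "comul (gdual H) g \<in> tens_span (annihilator H M) (annihilator H M)"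
    unfolding tens_span_eq_span
    using finite_comul_support[of g "gdual H"] comul_gdual_col_annihilator[OF M g]
      comul_gdual_row_annihilator[OF M g]
    by (intro tensor_spanI subspace_annihilator) auto
qed

lemma simple_subcoalg_annihilator:
  assumes M: "maximal_ideal H (hcomp H 0) M"
  shows "simple_subcoalg (gdual H) (annihilator H M)"
proof -
  have Mi: "two_sided_ideal H (hcomp H 0) M" and MA: "M \<noteq> hcomp H 0"
    and Mmax: "\<And>J. two_sided_ideal H (hcomp H 0) J \<Longrightarrow> M \<subseteq> J \<Longrightarrow> J = M \<or> J = hcomp H 0"
    using M unfolding maximal_ideal_def by auto
  note M0 = two_sided_idealD(1)[OF Mi] and Ms = two_sided_idealD(2)[OF Mi]
  have "annihilator H M \<noteq> {\<lambda>_. 0}"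
  proof
    assume "annihilator H M = {\<lambda>_. 0}"
    then have "annihilator H (annihilator H M) = hcomp H 0"
      by (auto simp: annihilator_def dot_def)
    then show False using annihilator_annihilator_subset[OF Ms M0] M0 MA by blast
  qed
  moreover have "E = {\<lambda>_. 0} \<or> E = annihilator H M"
    if E: "subcoalg (gdual H) E" "E \<subseteq> annihilator H M" for E
  proof -
    have E0: "E \<subseteq> hcomp H 0" using E(2) unfolding annihilator_def by auto
    have Es: "fv.subspace E" using E(1) unfolding subcoalg_def subspace_iff_fv_subspace by auto
    have "dot (basis_idx H 0) m e = 0" if "m \<in> M" "e \<in> E" for m e
      using E(2) that unfolding annihilator_def by (auto simp: dot_commute[of _ m])
    then have "M \<subseteq> annihilator H E"
      using M0 unfolding annihilator_def by auto
    then consider "annihilator H E = M" | "annihilator H E = hcomp H 0"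
      using Mmax[OF two_sided_ideal_annihilator[OF E(1) E0]] by blast
    then show ?thesis
    proof cases
      case 1
      then show ?thesis using annihilator_annihilator_subset[OF Es E0] E(2) by auto
    next
      case 2
      then have "E \<subseteq> {\<lambda>_. 0}" using annihilator_eq_hcomp0_imp_zero[OF _ E0] by blast
      moreover have "(\<lambda>_. 0) \<in> E" using fv.subspace_0[OF Es] by (simp add: zero_fun_def)
      ultimately show ?thesis by blast
    qed
  qed
  ultimately show ?thesis
    unfolding simple_subcoalg_def using subcoalg_annihilator[OF Mi] by blast
qed

lemma subalgebra_hcomp0: "subalgebra H (hcomp H 0)"
  unfolding subalgebra_def subspace_iff_fv_subspace
proof (intro conjI ballI subspace_hcomp one_hcomp)
  show "hcomp H 0 \<subseteq> carrier_H H" by (auto simp: hcomp_iff)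
  fix x y assume "x \<in> hcomp H 0" "y \<in> hcomp H 0"
  then show "mult H x y \<in> hcomp H 0" using mult_hcomp[of x H 0 y 0] by simp
qed

text \<open>An element of \<open>H\<^sup>0\<close> orthogonal to every simple subcoalgebra of \<open>L\<close> is orthogonal to the
  annihilator of every maximal ideal, hence lies in every maximal ideal, hence is zero.\<close>

lemma hcomp0_subset_coradical_gdual:
  assumes hopf: "graded_hopf H" and ss: "semisimple_alg H (hcomp H 0)"
  shows "hcomp H 0 \<subseteq> coradical (gdual H)"
proof
  interpret semisimple_hopf_subalgebra H "hcomp H 0"
    using hopf subalgebra_hcomp0 ss by unfold_locales
  fix f assume f: "f \<in> hcomp H 0"
  let ?S = "\<Union> {C. simple_subcoalg (gdual H) C}"
  have S0: "?S \<subseteq> hcomp H 0"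
    using simple_subcoalg_subset_hcomp0[OF counit_gdual[OF hopf]] by auto
  show "f \<in> coradical (gdual H)"
  proof (rule ccontr)
    assume "f \<notin> coradical (gdual H)"
    then obtain c where c: "c \<in> hcomp H 0" "\<forall>s\<in>?S. dot (basis_idx H 0) c s = 0"
        "dot (basis_idx H 0) c f \<noteq> 0"
      using exists_separating_dot_hcomp[OF S0 f] unfolding coradical_def lin_span_eq_span by blast
    have "c \<noteq> (\<lambda>_. 0)" using c(3) by (auto simp: dot_def)
    moreover have "hcomp H 0 \<subseteq> fv.span (hbasis_deg H 0)"
      using hcomp_span_hbasis_deg by blast
    ultimately obtain M where M: "maximal_ideal H (hcomp H 0) M" "c \<notin> M"
      using exists_maximal_ideal_avoiding[OF finite_hbasis_deg _ c(1)] by blast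
    then have Mi: "two_sided_ideal H (hcomp H 0) M" unfolding maximal_ideal_def by blast
    have "annihilator H M \<subseteq> ?S" using simple_subcoalg_annihilator[OF M(1)] by blast
    then have "\<forall>w\<in>annihilator H M. dot (basis_idx H 0) c w = 0" using c(2) by blast
    then have "c \<in> annihilator H (annihilator H M)"
      using c(1) unfolding annihilator_def[of H "annihilator H M"] by blast
    then show False
      using annihilator_annihilator_subset[OF two_sided_idealD(2,1)[OF Mi]] M(2) by blast
  qed
qed

lemma coradical_gdual:
  "graded_hopf H \<Longrightarrow> semisimple_alg H (hcomp H 0) \<Longrightarrow> coradical (gdual H) = hcomp (gdual H) 0"
  by (simp add: subset_antisym coradical_gdual_subset_hcomp0 hcomp0_subset_coradical_gdual)

theorem theorem2p2:
  fixes H :: "('k::field) hopf_data"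
  assumes "graded_hopf H"
    and "hcomp H 0 = coradical H"
    and "cosemisimple H (hcomp H 0)"
    and "semisimple_alg H (hcomp H 0)"
  shows "(coradically_graded H \<and> generated_by_01 H) \<longleftrightarrow>
         (coradically_graded (gdual H) \<and> generated_by_01 (gdual H))"
proof -
  have "coradically_graded H \<longleftrightarrow> inner_comul_injective H"
    using coradically_graded_iff_inner_comul_injective assms(2)[symmetric] by blast
  moreover have "coradically_graded (gdual H) \<longleftrightarrow> inner_comul_injective (gdual H)"
    using coradically_graded_iff_inner_comul_injective coradical_gdual[OF assms(1,4)] by blast
  moreover have "generated_by_01 H \<longleftrightarrow> spanned_by_lower_products H"
    using generated_by_01_iff_spanned_by_lower_products graded_hopf_mult_assoc assms(1) by blast
  moreover have "generated_by_01 (gdual H) \<longleftrightarrow> spanned_by_lower_products (gdual H)"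
    using generated_by_01_iff_spanned_by_lower_products mult_assoc_gdual assms(1) by blast
  ultimately show ?thesis
    using inner_comul_injective_gdual_iff spanned_by_lower_products_gdual_iff by blast
qed

end
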